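(* Let $n_1,n_2,n_3\ge 2$, $r\le\min\{n_1,n_2\}$, $b,c,\tau>0$, and $\mathcal{X}^*=\mathcal{A}^*\diamond\mathcal{B}^*$ with $\mathcal{A}^*\in\mathbb{R}_+^{n_1\times r\times n_3}$, $\mathcal{B}^*\in\mathbb{R}_+^{r\times n_2\times n_3}$, $0\le\mathcal{X}^*_{ijk}\le c/2$, $0\le\mathcal{A}^*_{ijk}\le1$, $0\le\mathcal{B}^*_{ijk}\le b$. Let $4\le m\le n_1n_2n_3$, $\Omega\sim\mathrm{Bern}(\frac{m}{n_1n_2n_3})$, and $\mathcal{Y}_{ijk}=\mathcal{X}^*_{ijk}+\epsilon_{ijk}$ for $(i,j,k)\in\Omega$ with $\epsilon_{ijk}$ i.i.d. Laplace with location $0$ and diversity $\tau$ (density $\frac{1}{2\tau}e^{-|x|/\tau}$). Let $\beta=\max\left\{3,1+\frac{\log(3rn_3^{1.5}b/c)}{\log(n_1\vee n_2)}\right\}$, $\kappa=\frac{c^2}{2\tau^2}$, $\lambda=4(\beta+2)\left(1+\frac{2\kappa}{3}\right)\log(n_1\vee n_2)$. Then the estimator $\widetilde{\mathcal{X}}^\lambda$ satisfies \[ \frac{\mathbb{E}_{\Omega,\mathcal{Y}_\Omega}\|\widetilde{\mathcal{X}}^\lambda-\mathcal{X}^*\|_F^2}{n_1n_2n_3}\le\frac{3c^2(2\tau+c)^2\log(m)}{m\tau^2}+2\left(3+\frac{c^2}{\tau^2}\right)(2\tau+c)^2(\beta+2)\left(\frac{rn_1n_3+\|\mathcal{B}^*\|_0}{m}\right)\log(n_1\vee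 n_2). \]
   Context: Tensor-tensor product $\diamond$: for $\mathcal{X}\in\mathbb{R}^{n_1\times n_2\times n_3}$ with frontal slices $\mathbf{X}^{(1)},\dots,\mathbf{X}^{(n_3)}$ and $\mathcal{Y}\in\mathbb{R}^{n_2\times n_4\times n_3}$, $\mathcal{X}\diamond\mathcal{Y}$ is obtained by multiplying the block-circulant matrix with $(p,q)$ block $\mathbf{X}^{((p-q)\bmod n_3+1)}$ by the vertical stack of the frontal slices of $\mathcal{Y}$ and folding back. $\|\cdot\|_0$ counts nonzero entries, $m\vee n=\max\{m,n\}$. $\Omega\sim\mathrm{Bern}(\gamma)$: each index included independently with probability $\gamma$. $p_x$ denotes the Laplace density with location $x$ and diversity $\tau$. With $\vartheta=2^{\lceil\beta\log_2(n_1\vee n_2)\rceil}$, $\mathfrak{L}$ = tensors in $\mathbb{R}_+^{n_1\times r\times n_3}$ with entries among $\vartheta$ uniformly spaced levels of $[0,1]$; $\mathfrak{D}$ = tensors in $\mathbb{R}_+^{r\times n_2\times n_3}$ with entries $0$ or among $\vartheta$ uniformly spaced levels of $[0,b]$; $\Gamma=\{\mathcal{A}\diamond\mathcal{B}:\mathcal{A}\in\mathfrak{L},\mathcal{B}\in\mathfrak{D},0\le(\mathcal{A}\diamond\mathcal{B})_{ijk}\le c\}$. Estimator: $\widetilde{\mathcal{X}}^\lambda\in\arg\min_{\mathcal{X}=\mathcal{A}\diamond\mathcal{B}\in\Gamma}\{-\log p_{\mathcal{X}_\Omega}(\mathcal{Y}_\Omega)+\lambda\|\mathcal{B}\|_0\}$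 with $p_{\mathcal{X}_\Omega}(\mathcal{Y}_\Omega)=\prod_{(i,j,k)\in\Omega}p_{\mathcal{X}_{ijk}}(\mathcal{Y}_{ijk})$. *)

theory Defs
  imports "HOL-Probability.Probability"
begin

type_synonym tensor = "nat \<Rightarrow> nat \<Rightarrow> nat \<Rightarrow> real"

definition box :: "nat \<Rightarrow> nat \<Rightarrow> nat \<Rightarrow> (nat \<times> nat \<times> nat) set" where
  "box n1 n2 n3 = {0..<n1} \<times> {0..<n2} \<times> {0..<n3}"

text \<open>Tensor-tensor product of A (n1 x r x n3) and B (r x n2 x n3): the p-th frontal slice
  of the result is sum over q of A^((p-q) mod n3) * B^(q) (0-based slices).\<close>
definition tprod :: "nat \<Rightarrow> nat \<Rightarrow> tensor \<Rightarrow> tensor \<Rightarrow> tensor" where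
  "tprod r n3 A B = (\<lambda>i j k. \<Sum>q<n3. \<Sum>l<r. A i l ((k + n3 - q) mod n3) * B l j q)"

definition l0norm :: "nat \<Rightarrow> nat \<Rightarrow> nat \<Rightarrow> tensor \<Rightarrow> nat" where
  "l0norm n1 n2 n3 X = card {(i,j,k) \<in> box n1 n2 n3. X i j k \<noteq> 0}"

definition frob2 :: "nat \<Rightarrow> nat \<Rightarrow> nat \<Rightarrow> tensor \<Rightarrow> real" where
  "frob2 n1 n2 n3 X = (\<Sum>(i,j,k) \<in> box n1 n2 n3. (X i j k)^2)"

definition theta :: "real \<Rightarrow> nat \<Rightarrow> nat \<Rightarrow> nat" where
  "theta \<beta> n1 n2 = 2 ^ nat \<lceil>\<beta> * log 2 (real (max n1 n2))\<rceil>"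

definition levels :: "nat \<Rightarrow> real \<Rightarrow> real set" where
  "levels th u = {u * real t / real (th - 1) | t. t < th}"

definition LL :: "nat \<Rightarrow> nat \<Rightarrow> nat \<Rightarrow> nat \<Rightarrow> tensor set" where
  "LL th n1 r n3 = {A. \<forall>(i,l,k) \<in> box n1 r n3. 0 \<le> A i l k \<and> A i l k \<in> levels th 1}"

definition DD :: "nat \<Rightarrow> real \<Rightarrow> nat \<Rightarrow> nat \<Rightarrow> nat \<Rightarrow> tensor set" where
  "DD th b r n2 n3 = {B. \<forall>(l,j,k) \<in> box r n2 n3. 0 \<le> B l j k \<and>
      (B l j k = 0 \<or> B l j k \<in> levels th b)}"

text \<open>Gamma, parametrised by the factor pairs (A,B) (the penalty depends on B).\<close>
definition Gam :: "nat \<Rightarrow> real \<Rightarrow> real \<Rightarrow> nat \<Rightarrow> nat \<Rightarrow> nat \<Rightarrow> nat \<Rightarrow> (tensor \<times> tensor) set" where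
  "Gam th b c n1 n2 n3 r = {(A,B). A \<in> LL th n1 r n3 \<and> B \<in> DD th b r n2 n3 \<and>
      (\<forall>(i,j,k) \<in> box n1 n2 n3. 0 \<le> tprod r n3 A B i j k \<and> tprod r n3 A B i j k \<le> c)}"

definition laplace_dens :: "real \<Rightarrow> real \<Rightarrow> real \<Rightarrow> real" where
  "laplace_dens \<tau> x y = exp (- \<bar>y - x\<bar> / \<tau>) / (2 * \<tau>)"

definition laplace_measure :: "real \<Rightarrow> real measure" where
  "laplace_measure \<tau> = density lborel (\<lambda>y. ennreal (laplace_dens \<tau> 0 y))"

definition objective :: "nat \<Rightarrow> nat \<Rightarrow> nat \<Rightarrow> nat \<Rightarrow> real \<Rightarrow> real \<Rightarrow>
    (nat \<times> nat \<times> nat) set \<Rightarrow> (nat \<times> nat \<times> nat \<Rightarrow> real) \<Rightarrow> tensor \<times> tensor \<Rightarrow> real" where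
  "objective n1 n2 n3 r \<tau> lam Om Y AB =
     (let X = tprod r n3 (fst AB) (snd AB) in
       - ln (\<Prod>(i,j,k) \<in> Om. laplace_dens \<tau> (X i j k) (Y (i,j,k)))
       + lam * real (l0norm r n2 n3 (snd AB)))"

definition beta_of :: "nat \<Rightarrow> nat \<Rightarrow> nat \<Rightarrow> nat \<Rightarrow> real \<Rightarrow> real \<Rightarrow> real" where
  "beta_of n1 n2 n3 r b c =
     max 3 (1 + ln (3 * real r * real n3 powr 1.5 * b / c) / ln (real (max n1 n2)))"

definition lam_of :: "nat \<Rightarrow> nat \<Rightarrow> real \<Rightarrow> real \<Rightarrow> real \<Rightarrow> real" where
  "lam_of n1 n2 \<beta> c \<tau> =
     (let \<kappa> = c^2 / (2 * \<tau>^2) in 4 * (\<beta> + 2) * (1 + 2 * \<kappa> / 3) * ln (real (max n1 n2)))"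

end

(*
  The estimator is compared with the quantization (A', B') of the true factors, which lies in the
  finite class Gamma.  For a candidate X write d = X - X*, L(X) for the log-likelihood ratio of X*
  against X on the observed entries, and H(X) = gamma * sum_e (1 - a(d_e)), where a is the Hellinger
  affinity of two Laplace laws.  The Chernoff bound with exponent 1/2 gives
  E exp (H(X) - L(X)/2) <= 1, so if the penalties pen satisfy Kraft's inequality, the sum S over
  the class of exp (H(X) - pen(X) - L(X)/2) has expectation at most 1.  Since the penalized
  estimator beats (A', B'), the inequality 1 + z <= exp z yields
    H(estimator) <= S - 1 + pen(A', B') + L(A', B') / 2,
  and the right-hand side has expectation at most pen(A', B') + gamma ||X' - X*||^2 / (2 tau^2).
  Finally 1 - a(d) >= d^2 / (2 (2 tau + c)^2) for |d| <= c, and the choices of beta and lambda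
  bound the quantization error and the penalty of (A', B') by the two terms of the claim.
*)

theory Submission
  imports Defs "HOL-Real_Asymp.Real_Asymp"
begin

section \<open>Laplace noise\<close>

lemma laplace_dens_measurable [measurable]: "laplace_dens \<tau> x \<in> borel_measurable borel"
  unfolding laplace_dens_def by measurable

lemma sets_laplace_measure [simp, measurable_cong]: "sets (laplace_measure \<tau>) = sets borel"
  unfolding laplace_measure_def by simp

lemma space_laplace_measure [simp]: "space (laplace_measure \<tau>) = UNIV"
  unfolding laplace_measure_def by simp

lemma nn_integral_laplace_measure:
  assumes "f \<in> borel_measurable borel"
  shows "(\<integral>\<^sup>+y. f y \<partial>laplace_measure \<tau>) = (\<integral>\<^sup>+y. ennreal (laplace_dens \<tau> 0 y) * f y \<partial>lborel)"
  unfolding laplace_measure_def using assms by (subst nn_integral_density) auto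

lemma emeasure_laplace_measure:
  assumes "A \<in> sets borel"
  shows "emeasure (laplace_measure \<tau>) A = (\<integral>\<^sup>+y. ennreal (laplace_dens \<tau> 0 y) * indicator A y \<partial>lborel)"
  unfolding laplace_measure_def using assms by (subst emeasure_density) auto

lemma laplace_dens_pos: "\<tau> > 0 \<Longrightarrow> laplace_dens \<tau> x y > 0"
  by (simp add: laplace_dens_def)

lemma ln_laplace_dens:
  assumes "\<tau> > 0"
  shows "ln (laplace_dens \<tau> x y) = - (\<bar>y - x\<bar> / \<tau> + ln (2 * \<tau>))"
  using assms by (simp add: laplace_dens_def ln_div)

lemma nn_integral_laplace_measure_reflect:
  assumes [measurable]: "f \<in> borel_measurable borel"
  shows "(\<integral>\<^sup>+y. f y \<partial>laplace_measure \<tau>) = (\<integral>\<^sup>+y. f (- y) \<partial>laplace_measure \<tau>)"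
proof -
  have "(\<lambda>y. ennreal (laplace_dens \<tau> 0 y) * f y) \<in> borel_measurable borel"
    by measurable
  from nn_integral_real_affine[OF this, of "-1" 0] show ?thesis
    by (simp add: nn_integral_laplace_measure laplace_dens_def)
qed

lemma emeasure_laplace_atLeast:
  assumes "\<tau> > 0" "d \<ge> 0"
  shows "emeasure (laplace_measure \<tau>) {d..} = ennreal (exp (- d / \<tau>) / 2)"
proof -
  have "emeasure (laplace_measure \<tau>) {d..}
      = (\<integral>\<^sup>+y. ennreal (exp (- y / \<tau>) / (2 * \<tau>)) * indicator {d..} y \<partial>lborel)"
    using assms by (auto simp: emeasure_laplace_measure laplace_dens_def indicator_def
        intro!: nn_integral_cong)
  also have "\<dots> = ennreal (0 - (- exp (- d / \<tau>) / 2))"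
  proof (rule nn_integral_FTC_atLeast)
    fix x
    show "((\<lambda>x. - exp (- x / \<tau>) / 2) has_real_derivative exp (- x / \<tau>) / (2 * \<tau>)) (at x)"
      using assms by (auto intro!: derivative_eq_intros simp: field_simps)
    show "0 \<le> exp (- x / \<tau>) / (2 * \<tau>)"
      using assms by simp
  next
    show "((\<lambda>x. - exp (- x / \<tau>) / 2) \<longlongrightarrow> 0) at_top"
      using assms by real_asymp
  qed simp
  finally show ?thesis
    by simp
qed

lemma emeasure_laplace_atMost:
  assumes "\<tau> > 0" "d \<le> 0"
  shows "emeasure (laplace_measure \<tau>) {..d} = ennreal (exp (d / \<tau>) / 2)"
proof -
  have "emeasure (laplace_measure \<tau>) {..d} = (\<integral>\<^sup>+y. indicator {..d} (- y) \<partial>laplace_measure \<tau>)"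
    by (subst nn_integral_laplace_measure_reflect[symmetric]) auto
  also have "\<dots> = (\<integral>\<^sup>+y. indicator {-d..} y \<partial>laplace_measure \<tau>)"
    by (intro nn_integral_cong) (auto simp: indicator_def)
  also have "\<dots> = emeasure (laplace_measure \<tau>) {-d..}"
    by (rule nn_integral_indicator) simp
  finally show ?thesis
    using assms by (simp add: emeasure_laplace_atLeast)
qed

lemma emeasure_laplace_singleton [simp]: "emeasure (laplace_measure \<tau>) {x} = 0"
proof -
  have "{x} \<in> null_sets lborel"
    by (auto intro: null_setsI)
  then show ?thesis
    by (simp add: emeasure_laplace_measure nn_integral_null_set)
qed

lemma emeasure_laplace_lessThan:
  assumes "\<tau> > 0" "d \<le> 0"
  shows "emeasure (laplace_measure \<tau>) {..<d} = ennreal (exp (d / \<tau>) / 2)"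
proof -
  have "emeasure (laplace_measure \<tau>) {..<d} + emeasure (laplace_measure \<tau>) {d}
      = emeasure (laplace_measure \<tau>) ({..<d} \<union> {d})"
    by (rule plus_emeasure) auto
  moreover have "{..<d} \<union> {d} = {..d}"
    by auto
  ultimately have "emeasure (laplace_measure \<tau>) {..d} = emeasure (laplace_measure \<tau>) {..<d}"
    by simp
  with emeasure_laplace_atMost[OF assms] show ?thesis
    by simp
qed

lemma prob_space_laplace_measure:
  assumes "\<tau> > 0"
  shows "prob_space (laplace_measure \<tau>)"
proof
  have "emeasure (laplace_measure \<tau>) {..<0} + emeasure (laplace_measure \<tau>) {0..}
      = emeasure (laplace_measure \<tau>) ({..<0} \<union> {0::real..})"
    by (rule plus_emeasure) auto
  moreover have "{..<0} \<union> {0::real..} = UNIV"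
    by auto
  ultimately have "emeasure (laplace_measure \<tau>) UNIV
      = emeasure (laplace_measure \<tau>) {..<0} + emeasure (laplace_measure \<tau>) {0..}"
    by simp
  also have "\<dots> = ennreal (1 / 2) + ennreal (1 / 2)"
    using assms by (simp add: emeasure_laplace_lessThan emeasure_laplace_atLeast)
  also have "\<dots> = ennreal (1 / 2 + 1 / 2)"
    by (rule ennreal_plus[symmetric]) auto
  finally show "emeasure (laplace_measure \<tau>) (space (laplace_measure \<tau>)) = 1"
    by simp
qed

(* The Hellinger affinity, the integral of sqrt (p_0 p_d), of the Laplace densities centred at 0 and d. *)
definition laplace_affinity :: "real \<Rightarrow> real \<Rightarrow> real" where
  "laplace_affinity \<tau> d = exp (- (\<bar>d\<bar> / (2 * \<tau>))) * (1 + \<bar>d\<bar> / (2 * \<tau>))"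

lemma laplace_affinity_le_1:
  assumes "\<tau> > 0"
  shows "laplace_affinity \<tau> d \<le> 1"
  using exp_ge_add_one_self[of "\<bar>d\<bar> / (2 * \<tau>)"] assms
  by (simp add: laplace_affinity_def exp_minus field_simps)

lemma laplace_dens_mult_exp_split:
  assumes "\<tau> > 0" "d \<ge> 0"
  defines "u \<equiv> d / (2 * \<tau>)"
  shows "laplace_dens \<tau> 0 y * exp (- (\<bar>y - d\<bar> - \<bar>y\<bar>) / (2 * \<tau>))
      = exp (- u) * (laplace_dens \<tau> 0 y * indicator {..<0} y) + exp (- u) / (2 * \<tau>) * indicator {0..<d} y
        + exp u * (laplace_dens \<tau> 0 y * indicator {d..} y)"
proof -
  consider "y < 0" | "0 \<le> y" "y < d" | "d \<le> y"
    by linarith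
  then show ?thesis
  proof cases
    case 1
    then show ?thesis
      using assms by (simp add: laplace_dens_def indicator_def)
  next
    case 2
    then have "- \<bar>y\<bar> / \<tau> + - (\<bar>y - d\<bar> - \<bar>y\<bar>) / (2 * \<tau>) = - u"
      using assms by (simp add: field_simps)
    then show ?thesis
      using 2 by (simp add: laplace_dens_def indicator_def mult_exp_exp)
  next
    case 3
    then show ?thesis
      using assms by (simp add: laplace_dens_def indicator_def)
  qed
qed

lemma nn_integral_laplace_affinity_nonneg:
  assumes "\<tau> > 0" "d \<ge> 0"
  shows "(\<integral>\<^sup>+y. ennreal (exp (- (\<bar>y - d\<bar> - \<bar>y\<bar>) / (2 * \<tau>))) \<partial>laplace_measure \<tau>)
      = ennreal (laplace_affinity \<tau> d)"
proof -
  define u where "u = d / (2 * \<tau>)"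
  let ?D = "laplace_dens \<tau> 0"
  note split = laplace_dens_mult_exp_split[OF assms, folded u_def]
  have "(\<integral>\<^sup>+y. ennreal (exp (- (\<bar>y - d\<bar> - \<bar>y\<bar>) / (2 * \<tau>))) \<partial>laplace_measure \<tau>)
      = (\<integral>\<^sup>+y. ennreal (exp (- u)) * (ennreal (?D y) * indicator {..<0} y)
          + ennreal (exp (- u) / (2 * \<tau>)) * indicator {0..<d} y
          + ennreal (exp u) * (ennreal (?D y) * indicator {d..} y) \<partial>lborel)"
  proof (subst nn_integral_laplace_measure, measurable, intro nn_integral_cong)
    fix y
    have "?D y \<ge> 0"
      using assms by (simp add: laplace_dens_def)
    then show "ennreal (?D y) * ennreal (exp (- (\<bar>y - d\<bar> - \<bar>y\<bar>) / (2 * \<tau>)))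
      = ennreal (exp (- u)) * (ennreal (?D y) * indicator {..<0} y)
          + ennreal (exp (- u) / (2 * \<tau>)) * indicator {0..<d} y
          + ennreal (exp u) * (ennreal (?D y) * indicator {d..} y)"
      using assms unfolding ennreal_mult'[OF \<open>?D y \<ge> 0\<close>, symmetric] split
      by (simp add: ennreal_mult'[symmetric] ennreal_plus[symmetric] ennreal_indicator[symmetric]
          del: ennreal_plus)
  qed
  also have "\<dots> = ennreal (exp (- u) / 2)
      + ennreal (exp (- u) / (2 * \<tau>)) * ennreal d
      + ennreal (exp u) * ennreal (exp (- d / \<tau>) / 2)"
    using assms
    by (simp add: nn_integral_add nn_integral_cmult emeasure_laplace_measure[symmetric]
        emeasure_laplace_lessThan emeasure_laplace_atLeast ennreal_mult'[symmetric]
        divide_ennreal_def[symmetric] ennreal_divide_numeral)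
  also have "\<dots> = ennreal (exp (- u) / 2 + exp (- u) / (2 * \<tau>) * d + exp u * (exp (- d / \<tau>) / 2))"
    using assms by (simp add: ennreal_mult'[symmetric] ennreal_plus[symmetric] del: ennreal_plus)
  also have "exp (- u) / 2 + exp (- u) / (2 * \<tau>) * d + exp u * (exp (- d / \<tau>) / 2)
      = laplace_affinity \<tau> d"
  proof -
    have "exp u * exp (- d / \<tau>) = exp (- u)"
      using assms by (simp add: mult_exp_exp u_def field_simps)
    then show ?thesis
      using assms by (simp add: laplace_affinity_def u_def field_simps)
  qed
  finally show ?thesis .
qed

lemma nn_integral_laplace_affinity:
  assumes "\<tau> > 0"
  shows "(\<integral>\<^sup>+y. ennreal (exp (- (\<bar>y - d\<bar> - \<bar>y\<bar>) / (2 * \<tau>))) \<partial>laplace_measure \<tau>)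
      = ennreal (laplace_affinity \<tau> d)"
proof (cases "d \<ge> 0")
  case True
  with assms show ?thesis
    by (rule nn_integral_laplace_affinity_nonneg)
next
  case False
  have "(\<integral>\<^sup>+y. ennreal (exp (- (\<bar>y - d\<bar> - \<bar>y\<bar>) / (2 * \<tau>))) \<partial>laplace_measure \<tau>)
      = (\<integral>\<^sup>+y. ennreal (exp (- (\<bar>y - (- d)\<bar> - \<bar>y\<bar>) / (2 * \<tau>))) \<partial>laplace_measure \<tau>)"
    by (subst nn_integral_laplace_measure_reflect)
      (auto intro!: nn_integral_cong simp: abs_minus_commute add.commute)
  also have "\<dots> = ennreal (laplace_affinity \<tau> d)"
    using nn_integral_laplace_affinity_nonneg[OF assms, of "- d"] False
    by (simp add: laplace_affinity_def)
  finally show ?thesis .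
qed

definition beyond :: "real \<Rightarrow> real set" where
  "beyond d = (if 0 \<le> d then {d..} else {..d})"

lemma beyond_measurable [measurable]: "beyond d \<in> sets borel"
  unfolding beyond_def by auto

lemma emeasure_laplace_beyond:
  assumes "\<tau> > 0"
  shows "emeasure (laplace_measure \<tau>) (beyond d) = ennreal (exp (- \<bar>d\<bar> / \<tau>) / 2)"
  using assms by (simp add: beyond_def emeasure_laplace_atLeast emeasure_laplace_atMost)

lemma abs_diff_minus_abs_le_beyond: "\<bar>y - d\<bar> - \<bar>y\<bar> \<le> \<bar>d\<bar> - 2 * \<bar>d\<bar> * indicator (beyond d) y"
  by (auto simp: beyond_def indicator_def)

section \<open>Observed entries and log-likelihood ratios\<close>

(* One tensor entry: the Boolean says whether it is observed, the real number is its Laplace noise. *)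
definition masked_laplace :: "real \<Rightarrow> real \<Rightarrow> (bool \<times> real) measure" where
  "masked_laplace \<gamma> \<tau> = measure_pmf (bernoulli_pmf \<gamma>) \<Otimes>\<^sub>M laplace_measure \<tau>"

lemma sets_masked_laplace [measurable_cong]:
  "sets (masked_laplace \<gamma> \<tau>) = sets (count_space UNIV \<Otimes>\<^sub>M borel)"
  unfolding masked_laplace_def by (intro sets_pair_measure_cong) auto

lemma prob_space_masked_laplace:
  assumes "\<tau> > 0"
  shows "prob_space (masked_laplace \<gamma> \<tau>)"
  unfolding masked_laplace_def
  by (intro prob_space_pair prob_space_measure_pmf prob_space_laplace_measure assms)

lemma nn_integral_masked_laplace:
  assumes "0 \<le> \<gamma>" "\<gamma> \<le> 1" "\<tau> > 0" "f \<in> borel_measurable (masked_laplace \<gamma> \<tau>)"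
  shows "(\<integral>\<^sup>+z. f z \<partial>masked_laplace \<gamma> \<tau>)
      = ennreal (1 - \<gamma>) * (\<integral>\<^sup>+y. f (False, y) \<partial>laplace_measure \<tau>)
        + ennreal \<gamma> * (\<integral>\<^sup>+y. f (True, y) \<partial>laplace_measure \<tau>)"
proof -
  interpret L: prob_space "laplace_measure \<tau>"
    using assms(3) by (rule prob_space_laplace_measure)
  have "(\<integral>\<^sup>+z. f z \<partial>masked_laplace \<gamma> \<tau>)
      = (\<integral>\<^sup>+x. \<integral>\<^sup>+y. f (x, y) \<partial>laplace_measure \<tau> \<partial>measure_pmf (bernoulli_pmf \<gamma>))"
    using assms(4) unfolding masked_laplace_def by (rule L.nn_integral_fst[symmetric])
  also have "\<dots> = (\<Sum>x\<in>UNIV. (\<integral>\<^sup>+y. f (x, y) \<partial>laplace_measure \<tau>) * pmf (bernoulli_pmf \<gamma>) x)"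
    by (rule nn_integral_measure_pmf_support) auto
  finally show ?thesis
    using assms by (simp add: UNIV_bool mult.commute add.commute)
qed

lemma measure_masked_laplace_observed:
  assumes "0 \<le> \<gamma>" "\<gamma> \<le> 1" "\<tau> > 0" "A \<in> sets borel"
  shows "measure (masked_laplace \<gamma> \<tau>) ({True} \<times> A) = \<gamma> * measure (laplace_measure \<tau>) A"
proof -
  interpret L: prob_space "laplace_measure \<tau>"
    using assms(3) by (rule prob_space_laplace_measure)
  have "emeasure (masked_laplace \<gamma> \<tau>) ({True} \<times> A)
      = (\<integral>\<^sup>+z. indicator ({True} \<times> A) z \<partial>masked_laplace \<gamma> \<tau>)"
    using assms by (simp add: nn_integral_indicator)
  also have "\<dots> = ennreal \<gamma> * (\<integral>\<^sup>+y. indicator A y \<partial>laplace_measure \<tau>)"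
    using assms by (subst nn_integral_masked_laplace) (simp_all add: indicator_times)
  also have "\<dots> = ennreal (\<gamma> * measure (laplace_measure \<tau>) A)"
    using assms by (simp add: nn_integral_indicator L.emeasure_eq_measure ennreal_mult)
  finally show ?thesis
    using assms by (simp add: measure_def)
qed

(* For the observation X* + y of a true value X* and a candidate X = X* + d this is ln (p_X* / p_X);
   unobserved entries contribute nothing. *)
definition log_lik_ratio :: "real \<Rightarrow> real \<Rightarrow> bool \<times> real \<Rightarrow> real" where
  "log_lik_ratio \<tau> d z = (if fst z then (\<bar>snd z - d\<bar> - \<bar>snd z\<bar>) / \<tau> else 0)"

lemma log_lik_ratio_measurable [measurable]:
  "log_lik_ratio \<tau> d \<in> borel_measurable (masked_laplace \<gamma> \<tau>')"
  unfolding log_lik_ratio_def by measurable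

lemma nn_integral_exp_half_log_lik_ratio:
  assumes "0 \<le> \<gamma>" "\<gamma> \<le> 1" "\<tau> > 0"
  shows "(\<integral>\<^sup>+z. ennreal (exp (- log_lik_ratio \<tau> d z / 2)) \<partial>masked_laplace \<gamma> \<tau>)
      = ennreal (1 - \<gamma> * (1 - laplace_affinity \<tau> d))"
proof -
  interpret L: prob_space "laplace_measure \<tau>"
    using assms(3) by (rule prob_space_laplace_measure)
  have unobserved: "(\<integral>\<^sup>+y. ennreal (exp (- log_lik_ratio \<tau> d (False, y) / 2)) \<partial>laplace_measure \<tau>) = 1"
    using L.emeasure_space_1 by (simp add: log_lik_ratio_def)
  have observed: "(\<integral>\<^sup>+y. ennreal (exp (- log_lik_ratio \<tau> d (True, y) / 2)) \<partial>laplace_measure \<tau>)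
      = ennreal (laplace_affinity \<tau> d)"
    by (subst nn_integral_laplace_affinity[OF assms(3), symmetric])
      (auto intro!: nn_integral_cong simp: log_lik_ratio_def mult.commute minus_divide_left)
  have "(\<integral>\<^sup>+z. ennreal (exp (- log_lik_ratio \<tau> d z / 2)) \<partial>masked_laplace \<gamma> \<tau>)
      = ennreal (1 - \<gamma>) * 1 + ennreal \<gamma> * ennreal (laplace_affinity \<tau> d)"
    using assms by (subst nn_integral_masked_laplace) (simp_all only: unobserved observed, auto)
  also have "\<dots> = ennreal (1 - \<gamma> + \<gamma> * laplace_affinity \<tau> d)"
    using assms by (simp add: laplace_affinity_def ennreal_mult'[symmetric] ennreal_plus[symmetric]
        del: ennreal_plus)
  finally show ?thesis
    by (simp add: algebra_simps)
qed

lemma log_lik_ratio_le_beyond: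
  assumes "\<tau> > 0"
  shows "log_lik_ratio \<tau> d z
      \<le> \<bar>d\<bar> / \<tau> * (indicator ({True} \<times> UNIV) z - 2 * indicator ({True} \<times> beyond d) z)"
proof (cases "fst z")
  case True
  have "(\<bar>snd z - d\<bar> - \<bar>snd z\<bar>) / \<tau> \<le> (\<bar>d\<bar> - 2 * \<bar>d\<bar> * indicator (beyond d) (snd z)) / \<tau>"
    using assms by (intro divide_right_mono abs_diff_minus_abs_le_beyond) simp
  also have "\<dots> = \<bar>d\<bar> / \<tau> * (1 - 2 * indicator (beyond d) (snd z))"
    by (simp add: field_simps)
  finally show ?thesis
    using True by (cases z) (simp add: log_lik_ratio_def indicator_times)
qed (cases z, simp add: log_lik_ratio_def indicator_times)

lemma abs_log_lik_ratio_le: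
  assumes "\<tau> > 0"
  shows "\<bar>log_lik_ratio \<tau> d z\<bar> \<le> \<bar>d\<bar> / \<tau>"
  using assms abs_triangle_ineq3[of "snd z - d" "snd z"]
  by (auto simp: log_lik_ratio_def abs_minus_commute divide_right_mono)

lemma integrable_log_lik_ratio:
  assumes "\<tau> > 0"
  shows "integrable (masked_laplace \<gamma> \<tau>) (log_lik_ratio \<tau> d)"
proof -
  interpret P: prob_space "masked_laplace \<gamma> \<tau>"
    using assms by (rule prob_space_masked_laplace)
  show ?thesis
    using assms abs_log_lik_ratio_le by (intro P.integrable_const_bound[of _ "\<bar>d\<bar> / \<tau>"]) auto
qed

lemma integral_log_lik_ratio_le:
  assumes "0 \<le> \<gamma>" "\<gamma> \<le> 1" "\<tau> > 0"
  shows "(\<integral>z. log_lik_ratio \<tau> d z \<partial>masked_laplace \<gamma> \<tau>) \<le> \<gamma> * d\<^sup>2 / \<tau>\<^sup>2"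
proof -
  interpret P: prob_space "masked_laplace \<gamma> \<tau>"
    using assms(3) by (rule prob_space_masked_laplace)
  interpret L: prob_space "laplace_measure \<tau>"
    using assms(3) by (rule prob_space_laplace_measure)
  let ?obs = "\<lambda>A. indicator ({True} \<times> A) :: bool \<times> real \<Rightarrow> real"
  have integrable_obs: "integrable (masked_laplace \<gamma> \<tau>) (?obs A)" if "A \<in> sets borel" for A
    using that by (intro integrable_real_indicator) (auto simp: P.emeasure_eq_measure)
  have integral_obs: "(\<integral>z. ?obs A z \<partial>masked_laplace \<gamma> \<tau>) = \<gamma> * measure (laplace_measure \<tau>) A"
    if "A \<in> sets borel" for A
    using that assms by (simp add: P.emeasure_eq_measure measure_masked_laplace_observed)
  have "(\<integral>z. log_lik_ratio \<tau> d z \<partial>masked_laplace \<gamma> \<tau>)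
      \<le> (\<integral>z. \<bar>d\<bar> / \<tau> * (?obs UNIV z - 2 * ?obs (beyond d) z) \<partial>masked_laplace \<gamma> \<tau>)"
    using assms integrable_obs
    by (intro integral_mono integrable_log_lik_ratio log_lik_ratio_le_beyond) auto
  also have "\<dots> = \<bar>d\<bar> / \<tau> * (\<gamma> - \<gamma> * exp (- \<bar>d\<bar> / \<tau>))"
    using assms integrable_obs integral_obs emeasure_laplace_beyond[OF assms(3), of d] L.prob_space
    by (simp add: L.emeasure_eq_measure)
  also have "\<dots> \<le> \<bar>d\<bar> / \<tau> * (\<gamma> * (\<bar>d\<bar> / \<tau>))"
  proof -
    have "\<gamma> * (1 - exp (- \<bar>d\<bar> / \<tau>)) \<le> \<gamma> * (\<bar>d\<bar> / \<tau>)"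
      using assms exp_ge_add_one_self[of "- \<bar>d\<bar> / \<tau>"] by (intro mult_left_mono) auto
    then show ?thesis
      using assms by (intro mult_left_mono) (auto simp: right_diff_distrib)
  qed
  also have "\<dots> = \<gamma> * \<bar>d\<bar>\<^sup>2 / \<tau>\<^sup>2"
    by (simp add: power2_eq_square)
  finally show ?thesis
    by simp
qed

section \<open>Risk of penalized likelihood over a finite class\<close>

lemma integral_PiM_component:
  fixes f :: "'a \<Rightarrow> real"
  assumes "\<And>i. i \<in> I \<Longrightarrow> prob_space (M i)" "i \<in> I" "f \<in> borel_measurable (M i)"
  shows "integrable (PiM I M) (\<lambda>\<omega>. f (\<omega> i)) \<longleftrightarrow> integrable (M i) f"
    and "(\<integral>\<omega>. f (\<omega> i) \<partial>PiM I M) = (\<integral>x. f x \<partial>M i)"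
proof -
  have distr: "distr (PiM I M) (M i) (\<lambda>\<omega>. \<omega> i) = M i"
    using assms by (intro distr_PiM_component) auto
  have component: "(\<lambda>\<omega>. \<omega> i) \<in> measurable (PiM I M) (M i)"
    using assms(2) by (rule measurable_component_singleton)
  show "integrable (PiM I M) (\<lambda>\<omega>. f (\<omega> i)) \<longleftrightarrow> integrable (M i) f"
    using integrable_distr_eq[OF component assms(3)] distr by simp
  show "(\<integral>\<omega>. f (\<omega> i) \<partial>PiM I M) = (\<integral>x. f x \<partial>M i)"
    using integral_distr[OF component assms(3)] distr by simp
qed

lemma nn_integral_exp_half_sum_log_lik_ratio:
  fixes I :: "'i set" and d :: "'i \<Rightarrow> real"
  assumes "finite I" "0 \<le> \<gamma>" "\<gamma> \<le> 1" "\<tau> > 0"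
  shows "(\<integral>\<^sup>+\<omega>. ennreal (exp (- (\<Sum>e\<in>I. log_lik_ratio \<tau> (d e) (\<omega> e)) / 2))
            \<partial>PiM I (\<lambda>_. masked_laplace \<gamma> \<tau>))
      \<le> ennreal (exp (- (\<gamma> * (\<Sum>e\<in>I. 1 - laplace_affinity \<tau> (d e)))))"
proof -
  interpret product_sigma_finite "\<lambda>_::'i. masked_laplace \<gamma> \<tau>"
    unfolding product_sigma_finite_def
    using prob_space_imp_sigma_finite[OF prob_space_masked_laplace[OF assms(4)]] by simp
  have factor_nonneg: "0 \<le> 1 - \<gamma> * (1 - laplace_affinity \<tau> (d e))" for e
    using assms laplace_affinity_le_1[OF assms(4), of "d e"]
    by (simp add: laplace_affinity_def mult_le_one)
  have "(\<integral>\<^sup>+\<omega>. ennreal (exp (- (\<Sum>e\<in>I. log_lik_ratio \<tau> (d e) (\<omega> e)) / 2))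
            \<partial>PiM I (\<lambda>_. masked_laplace \<gamma> \<tau>))
      = (\<integral>\<^sup>+\<omega>. (\<Prod>e\<in>I. ennreal (exp (- log_lik_ratio \<tau> (d e) (\<omega> e) / 2)))
            \<partial>PiM I (\<lambda>_. masked_laplace \<gamma> \<tau>))"
    using assms(1)
    by (simp add: prod_ennreal exp_sum[symmetric] sum_divide_distrib sum_negf[symmetric])
  also have "\<dots> = (\<Prod>e\<in>I. \<integral>\<^sup>+z. ennreal (exp (- log_lik_ratio \<tau> (d e) z / 2)) \<partial>masked_laplace \<gamma> \<tau>)"
    using assms(1) by (rule product_nn_integral_prod) auto
  also have "\<dots> = (\<Prod>e\<in>I. ennreal (1 - \<gamma> * (1 - laplace_affinity \<tau> (d e))))"
    using assms by (intro prod.cong refl nn_integral_exp_half_log_lik_ratio)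
  also have "\<dots> = ennreal (\<Prod>e\<in>I. 1 - \<gamma> * (1 - laplace_affinity \<tau> (d e)))"
    using factor_nonneg by (simp add: prod_ennreal)
  also have "\<dots> \<le> ennreal (\<Prod>e\<in>I. exp (- \<gamma> * (1 - laplace_affinity \<tau> (d e))))"
  proof (intro ennreal_leI prod_mono conjI factor_nonneg)
    show "1 - \<gamma> * (1 - laplace_affinity \<tau> (d e)) \<le> exp (- \<gamma> * (1 - laplace_affinity \<tau> (d e)))" for e
      using exp_ge_add_one_self[of "- \<gamma> * (1 - laplace_affinity \<tau> (d e))"] by simp
  qed
  also have "\<dots> = ennreal (exp (- (\<gamma> * (\<Sum>e\<in>I. 1 - laplace_affinity \<tau> (d e)))))"
    using assms(1) by (simp add: exp_sum[symmetric] sum_distrib_left sum_negf)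
  finally show ?thesis .
qed

lemma nn_integral_sum_exp_penalized_le_1:
  fixes I :: "'i set" and G :: "'g set" and d :: "'g \<Rightarrow> 'i \<Rightarrow> real" and pen :: "'g \<Rightarrow> real"
  assumes "finite I" "finite G" "0 \<le> \<gamma>" "\<gamma> \<le> 1" "\<tau> > 0" "(\<Sum>g\<in>G. exp (- pen g)) \<le> 1"
  shows "(\<integral>\<^sup>+\<omega>. ennreal (\<Sum>g\<in>G. exp (\<gamma> * (\<Sum>e\<in>I. 1 - laplace_affinity \<tau> (d g e)) - pen g
             - (\<Sum>e\<in>I. log_lik_ratio \<tau> (d g e) (\<omega> e)) / 2)) \<partial>PiM I (\<lambda>_. masked_laplace \<gamma> \<tau>))
      \<le> 1"
proof -
  let ?M = "PiM I (\<lambda>_. masked_laplace \<gamma> \<tau>)"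
  let ?H = "\<lambda>g. \<gamma> * (\<Sum>e\<in>I. 1 - laplace_affinity \<tau> (d g e))"
  let ?L = "\<lambda>g \<omega>. \<Sum>e\<in>I. log_lik_ratio \<tau> (d g e) (\<omega> e)"
  have "(\<integral>\<^sup>+\<omega>. ennreal (\<Sum>g\<in>G. exp (?H g - pen g - ?L g \<omega> / 2)) \<partial>?M)
      = (\<integral>\<^sup>+\<omega>. (\<Sum>g\<in>G. ennreal (exp (?H g - pen g)) * ennreal (exp (- ?L g \<omega> / 2))) \<partial>?M)"
  proof (intro nn_integral_cong)
    fix \<omega>
    have "ennreal (\<Sum>g\<in>G. exp (?H g - pen g - ?L g \<omega> / 2))
        = (\<Sum>g\<in>G. ennreal (exp (?H g - pen g - ?L g \<omega> / 2)))"
      by (rule sum_ennreal[symmetric]) simp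
    also have "\<dots> = (\<Sum>g\<in>G. ennreal (exp (?H g - pen g)) * ennreal (exp (- ?L g \<omega> / 2)))"
      by (intro sum.cong refl, subst ennreal_mult''[symmetric]) (simp_all flip: exp_add)
    finally show "ennreal (\<Sum>g\<in>G. exp (?H g - pen g - ?L g \<omega> / 2))
        = (\<Sum>g\<in>G. ennreal (exp (?H g - pen g)) * ennreal (exp (- ?L g \<omega> / 2)))" .
  qed
  also have "\<dots> = (\<Sum>g\<in>G. ennreal (exp (?H g - pen g)) * (\<integral>\<^sup>+\<omega>. ennreal (exp (- ?L g \<omega> / 2)) \<partial>?M))"
    using assms(1) by (subst nn_integral_sum) (auto simp: nn_integral_cmult)
  also have "\<dots> \<le> (\<Sum>g\<in>G. ennreal (exp (?H g - pen g)) * ennreal (exp (- ?H g)))"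
    using assms by (intro sum_mono mult_left_mono nn_integral_exp_half_sum_log_lik_ratio) auto
  also have "\<dots> = (\<Sum>g\<in>G. ennreal (exp (- pen g)))"
    by (intro sum.cong refl, subst ennreal_mult''[symmetric]) (simp_all flip: exp_add)
  also have "\<dots> = ennreal (\<Sum>g\<in>G. exp (- pen g))"
    by (rule sum_ennreal) simp
  also have "\<dots> \<le> 1"
    using assms(6) by simp
  finally show ?thesis .
qed

lemma integral_sum_log_lik_ratio_le:
  fixes I :: "'i set" and d :: "'i \<Rightarrow> real"
  assumes "finite I" "0 \<le> \<gamma>" "\<gamma> \<le> 1" "\<tau> > 0"
  shows "integrable (PiM I (\<lambda>_. masked_laplace \<gamma> \<tau>)) (\<lambda>\<omega>. \<Sum>e\<in>I. log_lik_ratio \<tau> (d e) (\<omega> e))"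
    and "(\<integral>\<omega>. (\<Sum>e\<in>I. log_lik_ratio \<tau> (d e) (\<omega> e)) \<partial>PiM I (\<lambda>_. masked_laplace \<gamma> \<tau>))
      \<le> \<gamma> * (\<Sum>e\<in>I. (d e)\<^sup>2) / \<tau>\<^sup>2"
proof -
  let ?M = "PiM I (\<lambda>_. masked_laplace \<gamma> \<tau>)"
  note component = integral_PiM_component[of I "\<lambda>_. masked_laplace \<gamma> \<tau>",
      OF prob_space_masked_laplace[OF assms(4)]]
  have integrable: "integrable ?M (\<lambda>\<omega>. log_lik_ratio \<tau> (d e) (\<omega> e))" if "e \<in> I" for e
    using that assms(4) by (simp add: component integrable_log_lik_ratio)
  then show "integrable ?M (\<lambda>\<omega>. \<Sum>e\<in>I. log_lik_ratio \<tau> (d e) (\<omega> e))"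
    by (intro Bochner_Integration.integrable_sum)
  have "(\<integral>\<omega>. (\<Sum>e\<in>I. log_lik_ratio \<tau> (d e) (\<omega> e)) \<partial>?M)
      = (\<Sum>e\<in>I. \<integral>z. log_lik_ratio \<tau> (d e) z \<partial>masked_laplace \<gamma> \<tau>)"
    using integrable by (simp add: Bochner_Integration.integral_sum component)
  also have "\<dots> \<le> (\<Sum>e\<in>I. \<gamma> * (d e)\<^sup>2 / \<tau>\<^sup>2)"
    using assms by (intro sum_mono integral_log_lik_ratio_le)
  finally show "(\<integral>\<omega>. (\<Sum>e\<in>I. log_lik_ratio \<tau> (d e) (\<omega> e)) \<partial>?M) \<le> \<gamma> * (\<Sum>e\<in>I. (d e)\<^sup>2) / \<tau>\<^sup>2"
    by (simp add: sum_distrib_left sum_divide_distrib)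
qed

lemma exp_neg_mult_one_plus_le:
  fixes u :: real
  assumes "u \<ge> 0"
  shows "exp (- u) * (1 + u) \<le> 1 - u\<^sup>2 / (2 * (1 + u)\<^sup>2)"
proof -
  have "(1 + u) * (2 * (1 + u)\<^sup>2) \<le> (1 + u + u\<^sup>2 / 2) * (2 * (1 + u)\<^sup>2 - u\<^sup>2)"
  proof -
    have "(1 + u + u\<^sup>2 / 2) * (2 * (1 + u)\<^sup>2 - u\<^sup>2) - (1 + u) * (2 * (1 + u)\<^sup>2) = u ^ 3 + u ^ 4 / 2"
      by (simp add: power2_eq_square power3_eq_cube power4_eq_xxxx algebra_simps)
    moreover have "0 \<le> u ^ 3 + u ^ 4 / 2"
      using assms by simp
    ultimately show ?thesis
      by linarith
  qed
  also have "\<dots> \<le> exp u * (2 * (1 + u)\<^sup>2 - u\<^sup>2)"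
  proof (rule mult_right_mono)
    show "1 + u + u\<^sup>2 / 2 \<le> exp u"
      using assms by (rule exp_lower_Taylor_quadratic)
    have "u\<^sup>2 \<le> (1 + u)\<^sup>2"
      using assms by (intro power_mono) auto
    then show "0 \<le> 2 * (1 + u)\<^sup>2 - u\<^sup>2"
      using zero_le_power2[of "1 + u"] by linarith
  qed
  finally have "1 + u \<le> exp u * (1 - u\<^sup>2 / (2 * (1 + u)\<^sup>2))"
    using assms by (simp add: field_simps)
  then show ?thesis
    by (simp add: exp_minus field_simps)
qed

lemma sq_div_le_one_minus_laplace_affinity:
  assumes "\<tau> > 0" "\<bar>d\<bar> \<le> c"
  shows "d\<^sup>2 / (2 * (2 * \<tau> + c)\<^sup>2) \<le> 1 - laplace_affinity \<tau> d"
proof -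
  define u where "u = \<bar>d\<bar> / (2 * \<tau>)"
  have "d\<^sup>2 / (2 * (2 * \<tau> + c)\<^sup>2) \<le> d\<^sup>2 / (2 * (2 * \<tau> + \<bar>d\<bar>)\<^sup>2)"
    using assms by (intro divide_left_mono mult_left_mono power_mono) auto
  also have "\<dots> = u\<^sup>2 / (2 * (1 + u)\<^sup>2)"
    using assms by (simp add: u_def field_simps power2_eq_square)
  also have "\<dots> \<le> 1 - laplace_affinity \<tau> d"
    using exp_neg_mult_one_plus_le[of u] assms by (simp add: laplace_affinity_def u_def)
  finally show ?thesis .
qed

lemma integral_sum_exp_penalized_le_1:
  fixes I :: "'i set" and G :: "'g set" and d :: "'g \<Rightarrow> 'i \<Rightarrow> real" and pen :: "'g \<Rightarrow> real"
    and \<gamma> \<tau> :: real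
  defines "S \<equiv> \<lambda>\<omega>. \<Sum>g\<in>G. exp (\<gamma> * (\<Sum>e\<in>I. 1 - laplace_affinity \<tau> (d g e)) - pen g
      - (\<Sum>e\<in>I. log_lik_ratio \<tau> (d g e) (\<omega> e)) / 2)"
  assumes "finite I" "finite G" "0 \<le> \<gamma>" "\<gamma> \<le> 1" "\<tau> > 0" "(\<Sum>g\<in>G. exp (- pen g)) \<le> 1"
  shows "integrable (PiM I (\<lambda>_. masked_laplace \<gamma> \<tau>)) S"
    and "(\<integral>\<omega>. S \<omega> \<partial>PiM I (\<lambda>_. masked_laplace \<gamma> \<tau>)) \<le> 1"
proof -
  let ?M = "PiM I (\<lambda>_. masked_laplace \<gamma> \<tau>)"
  have measurable: "S \<in> borel_measurable ?M"
    unfolding S_def by measurable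
  have nonneg: "S \<omega> \<ge> 0" for \<omega>
    unfolding S_def by (intro sum_nonneg) auto
  have nn_integral: "(\<integral>\<^sup>+\<omega>. ennreal (S \<omega>) \<partial>?M) \<le> 1"
    unfolding S_def using assms(2-) by (rule nn_integral_sum_exp_penalized_le_1)
  show "integrable ?M S"
    using nonneg le_less_trans[OF nn_integral] by (intro integrableI_nonneg[OF measurable]) auto
  show "(\<integral>\<omega>. S \<omega> \<partial>?M) \<le> 1"
    using nn_integral nonneg
    by (subst integral_eq_nn_integral[OF measurable]) (auto intro: enn2real_leI)
qed

lemma sq_dev_le_sum_exp_penalized:
  fixes I :: "'i set" and G :: "'g set" and d :: "'g \<Rightarrow> 'i \<Rightarrow> real" and pen :: "'g \<Rightarrow> real"
  assumes "finite G" "g \<in> G" "0 \<le> \<gamma>" "\<tau> > 0" "\<And>e. e \<in> I \<Longrightarrow> \<bar>d g e\<bar> \<le> c"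
  shows "\<gamma> / (2 * (2 * \<tau> + c)\<^sup>2) * (\<Sum>e\<in>I. (d g e)\<^sup>2)
      \<le> (\<Sum>h\<in>G. exp (\<gamma> * (\<Sum>e\<in>I. 1 - laplace_affinity \<tau> (d h e)) - pen h
            - (\<Sum>e\<in>I. log_lik_ratio \<tau> (d h e) (\<omega> e)) / 2))
        - 1 + pen g + (\<Sum>e\<in>I. log_lik_ratio \<tau> (d g e) (\<omega> e)) / 2"
proof -
  let ?H = "\<gamma> * (\<Sum>e\<in>I. 1 - laplace_affinity \<tau> (d g e))"
  let ?z = "?H - pen g - (\<Sum>e\<in>I. log_lik_ratio \<tau> (d g e) (\<omega> e)) / 2"
  have "\<gamma> / (2 * (2 * \<tau> + c)\<^sup>2) * (\<Sum>e\<in>I. (d g e)\<^sup>2) = \<gamma> * (\<Sum>e\<in>I. (d g e)\<^sup>2 / (2 * (2 * \<tau> + c)\<^sup>2))"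
    by (simp add: sum_divide_distrib[symmetric])
  also have "\<dots> \<le> ?H"
    using assms by (intro mult_left_mono sum_mono sq_div_le_one_minus_laplace_affinity) auto
  also have "\<dots> \<le> exp ?z - 1 + pen g + (\<Sum>e\<in>I. log_lik_ratio \<tau> (d g e) (\<omega> e)) / 2"
    using exp_ge_add_one_self[of ?z] by linarith
  also have "exp ?z \<le> (\<Sum>h\<in>G. exp (\<gamma> * (\<Sum>e\<in>I. 1 - laplace_affinity \<tau> (d h e)) - pen h
            - (\<Sum>e\<in>I. log_lik_ratio \<tau> (d h e) (\<omega> e)) / 2))"
    by (rule member_le_sum[OF assms(2) _ assms(1)]) simp
  finally show ?thesis
    by simp
qed

theorem penalized_mle_risk_bound:
  fixes I :: "'i set" and G :: "'g set" and d :: "'g \<Rightarrow> 'i \<Rightarrow> real" and pen :: "'g \<Rightarrow> real"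
    and sel :: "('i \<Rightarrow> bool \<times> real) \<Rightarrow> 'g" and d' :: "'i \<Rightarrow> real" and \<gamma> \<tau> c pen' :: real
  defines "M \<equiv> PiM I (\<lambda>_. masked_laplace \<gamma> \<tau>)"
  assumes "finite I" "finite G" "0 \<le> \<gamma>" "\<gamma> \<le> 1" "\<tau> > 0"
    and kraft: "(\<Sum>g\<in>G. exp (- pen g)) \<le> 1"
    and sel: "\<And>\<omega>. \<omega> \<in> space M \<Longrightarrow> sel \<omega> \<in> G"
    and bounded: "\<And>\<omega> e. \<omega> \<in> space M \<Longrightarrow> e \<in> I \<Longrightarrow> \<bar>d (sel \<omega>) e\<bar> \<le> c"
    and minimal: "\<And>\<omega>. \<omega> \<in> space M \<Longrightarrow>
      (\<Sum>e\<in>I. log_lik_ratio \<tau> (d (sel \<omega>) e) (\<omega> e)) / 2 + pen (sel \<omega>)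
        \<le> (\<Sum>e\<in>I. log_lik_ratio \<tau> (d' e) (\<omega> e)) / 2 + pen'"
    and measurable: "(\<lambda>\<omega>. \<Sum>e\<in>I. (d (sel \<omega>) e)\<^sup>2) \<in> borel_measurable M"
  shows "\<gamma> / (2 * (2 * \<tau> + c)\<^sup>2) * (\<integral>\<omega>. (\<Sum>e\<in>I. (d (sel \<omega>) e)\<^sup>2) \<partial>M)
      \<le> \<gamma> * (\<Sum>e\<in>I. (d' e)\<^sup>2) / (2 * \<tau>\<^sup>2) + pen'"
proof -
  interpret M: prob_space M
    unfolding M_def using \<open>\<tau> > 0\<close> by (intro prob_space_PiM prob_space_masked_laplace)
  define S where "S \<omega> = (\<Sum>g\<in>G. exp (\<gamma> * (\<Sum>e\<in>I. 1 - laplace_affinity \<tau> (d g e)) - pen g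
      - (\<Sum>e\<in>I. log_lik_ratio \<tau> (d g e) (\<omega> e)) / 2))" for \<omega>
  define L' where "L' \<omega> = (\<Sum>e\<in>I. log_lik_ratio \<tau> (d' e) (\<omega> e))" for \<omega> :: "'i \<Rightarrow> bool \<times> real"
  define err where "err \<omega> = (\<Sum>e\<in>I. (d (sel \<omega>) e)\<^sup>2)" for \<omega>
  have S: "integrable M S" "(\<integral>\<omega>. S \<omega> \<partial>M) \<le> 1"
    using integral_sum_exp_penalized_le_1[of I G \<gamma> \<tau> pen d] assms by (simp_all add: S_def[abs_def])
  have L': "integrable M L'" "(\<integral>\<omega>. L' \<omega> \<partial>M) \<le> \<gamma> * (\<Sum>e\<in>I. (d' e)\<^sup>2) / \<tau>\<^sup>2"
    using integral_sum_log_lik_ratio_le[of I \<gamma> \<tau> d'] assms by (simp_all add: L'_def[abs_def])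
  have "integrable M err"
  proof (rule M.integrable_const_bound[where B = "real (card I) * c\<^sup>2"])
    have "err \<omega> \<le> (\<Sum>e\<in>I. c\<^sup>2)" if "\<omega> \<in> space M" for \<omega>
      unfolding err_def using bounded[OF that]
      by (intro sum_mono) (metis abs_ge_zero power2_abs power_mono)
    then show "AE \<omega> in M. norm (err \<omega>) \<le> real (card I) * c\<^sup>2"
      by (simp add: err_def sum_nonneg)
  qed (use measurable in \<open>simp add: err_def[abs_def]\<close>)
  moreover have "\<gamma> / (2 * (2 * \<tau> + c)\<^sup>2) * err \<omega> \<le> S \<omega> - 1 + L' \<omega> / 2 + pen'"
    if "\<omega> \<in> space M" for \<omega>
    using sq_dev_le_sum_exp_penalized[of G "sel \<omega>" \<gamma> \<tau> I d c pen \<omega>] minimal[OF that]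
      sel[OF that] bounded[OF that] assms
    by (simp add: S_def err_def L'_def)
  ultimately have "\<gamma> / (2 * (2 * \<tau> + c)\<^sup>2) * (\<integral>\<omega>. err \<omega> \<partial>M)
      \<le> (\<integral>\<omega>. S \<omega> - 1 + L' \<omega> / 2 + pen' \<partial>M)"
    using S L' by (subst integral_mult_right_zero[symmetric]) (intro integral_mono, auto)
  also have "\<dots> = (\<integral>\<omega>. S \<omega> \<partial>M) - 1 + (\<integral>\<omega>. L' \<omega> \<partial>M) / 2 + pen'"
    using S L' by (simp add: M.prob_space)
  also have "\<dots> \<le> \<gamma> * (\<Sum>e\<in>I. (d' e)\<^sup>2) / (2 * \<tau>\<^sup>2) + pen'"
    using S L' by simp
  finally show ?thesis
    by (simp add: err_def)
qed

section \<open>Sparse factor models\<close>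

lemma prod_if_zero_one_exp:
  fixes b :: "'i \<Rightarrow> real"
  assumes "finite I"
  shows "(\<Prod>e\<in>I. if b e = 0 then 1 else exp (- h)) = exp (- h * real (card {e\<in>I. b e \<noteq> 0}))"
proof -
  have "{e\<in>I. b e \<noteq> 0} = I \<inter> - {e. b e = 0}"
    by auto
  with assms show ?thesis
    by (simp add: prod.If_cases exp_of_nat_mult[symmetric] mult.commute)
qed

lemma sum_PiE_exp_neg_card_nonzero_le:
  fixes I :: "'i set" and V :: "real set"
  assumes "finite I" "finite V" "real (card (V - {0})) \<le> T"
  shows "(\<Sum>b\<in>PiE I (\<lambda>_. V). exp (- h * real (card {e\<in>I. b e \<noteq> 0}))) \<le> (1 + T * exp (- h)) ^ card I"
proof -
  have "(\<Sum>b\<in>PiE I (\<lambda>_. V). exp (- h * real (card {e\<in>I. b e \<noteq> 0})))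
      = (\<Sum>b\<in>PiE I (\<lambda>_. V). \<Prod>e\<in>I. if b e = 0 then 1 else exp (- h))"
    using assms(1) by (simp add: prod_if_zero_one_exp)
  also have "\<dots> = (\<Prod>e\<in>I. \<Sum>v\<in>V. if v = 0 then 1 else exp (- h))"
    using assms by (intro prod_sum_PiE[symmetric]) auto
  also have "\<dots> \<le> (\<Prod>e\<in>I. 1 + T * exp (- h))"
  proof (intro prod_mono conjI)
    fix e
    show "0 \<le> (\<Sum>v\<in>V. if v = 0 then 1 else exp (- h))"
      by (intro sum_nonneg) auto
    have "(\<Sum>v\<in>V. if v = 0 then 1 else exp (- h)) \<le> (\<Sum>v\<in>insert 0 V. if v = 0 then 1 else exp (- h))"
      using assms(2) by (intro sum_mono2) auto
    also have "\<dots> = 1 + real (card (V - {0})) * exp (- h)"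
      using assms(2) by (simp add: sum.insert_remove)
    also have "\<dots> \<le> 1 + T * exp (- h)"
      using assms(3) by (simp add: mult_right_mono)
    finally show "(\<Sum>v\<in>V. if v = 0 then 1 else exp (- h)) \<le> 1 + T * exp (- h)" .
  qed
  finally show ?thesis
    by simp
qed

definition tensor_entry :: "tensor \<Rightarrow> nat \<times> nat \<times> nat \<Rightarrow> real" where
  "tensor_entry X = (\<lambda>(i, j, k). X i j k)"

definition tensor_of :: "(nat \<times> nat \<times> nat \<Rightarrow> real) \<Rightarrow> tensor" where
  "tensor_of f = (\<lambda>i j k. f (i, j, k))"

lemma finite_box [simp]: "finite (box n1 n2 n3)"
  by (simp add: box_def)

lemma card_box: "card (box n1 n2 n3) = n1 * n2 * n3"
  by (simp add: box_def card_cartesian_product)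

lemma levels_eq_image: "levels th u = (\<lambda>t. u * real t / real (th - 1)) ` {..<th}"
  by (auto simp: levels_def)

lemma finite_levels [simp]: "finite (levels th u)"
  by (simp add: levels_eq_image)

lemma card_levels_le: "card (levels th u) \<le> th"
  unfolding levels_eq_image by (metis card_image_le card_lessThan finite_lessThan)

lemma zero_mem_levels: "th \<ge> 1 \<Longrightarrow> 0 \<in> levels th u"
  unfolding levels_def by force

definition factor_grid :: "nat \<Rightarrow> real \<Rightarrow> nat \<Rightarrow> nat \<Rightarrow> nat \<Rightarrow> nat
    \<Rightarrow> ((nat \<times> nat \<times> nat \<Rightarrow> real) \<times> (nat \<times> nat \<times> nat \<Rightarrow> real)) set" where
  "factor_grid th b n1 n2 n3 r =
     PiE (box n1 r n3) (\<lambda>_. levels th 1) \<times> PiE (box r n2 n3) (\<lambda>_. levels th b)"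

(* With h = lambda / 2 this is lambda / 2 * ||B||_0 plus a constant that makes the penalties
   satisfy Kraft's inequality on the grid. *)
definition factor_penalty :: "nat \<Rightarrow> real \<Rightarrow> nat \<Rightarrow> nat \<Rightarrow> nat \<Rightarrow> nat \<Rightarrow> (nat \<times> nat \<times> nat \<Rightarrow> real) \<Rightarrow> real" where
  "factor_penalty th h n1 n2 n3 r B =
     real (n1 * r * n3) * ln (real th) + real (r * n2 * n3) * ln (1 + real th * exp (- h))
     + h * real (card {e \<in> box r n2 n3. B e \<noteq> 0})"

lemma finite_factor_grid: "finite (factor_grid th b n1 n2 n3 r)"
  by (simp add: factor_grid_def finite_PiE)

lemma exp_neg_factor_penalty:
  assumes "th \<ge> 1"
  shows "exp (- factor_penalty th h n1 n2 n3 r B)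
      = exp (- h * real (card {e \<in> box r n2 n3. B e \<noteq> 0}))
        / (real th ^ (n1 * r * n3) * (1 + real th * exp (- h)) ^ (r * n2 * n3))"
proof -
  define W where "W = 1 + real th * exp (- h)"
  have "W > 0"
    by (simp add: W_def add_pos_nonneg)
  have exp_split: "exp (- (x + y + z)) = exp (- z) / (exp x * exp y)" for x y z :: real
    by (simp add: divide_inverse mult_exp_exp flip: exp_minus)
  have "exp (- factor_penalty th h n1 n2 n3 r B)
      = exp (- (h * real (card {e \<in> box r n2 n3. B e \<noteq> 0})))
        / (exp (real (n1 * r * n3) * ln (real th)) * exp (real (r * n2 * n3) * ln W))"
    unfolding factor_penalty_def W_def[symmetric] by (rule exp_split)
  also have "\<dots> = exp (- h * real (card {e \<in> box r n2 n3. B e \<noteq> 0}))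
      / (real th ^ (n1 * r * n3) * W ^ (r * n2 * n3))"
    using assms \<open>W > 0\<close> by (simp add: exp_of_nat_mult del: of_nat_mult)
  finally show ?thesis
    by (simp add: W_def)
qed

lemma factor_grid_kraft:
  assumes "th \<ge> 1"
  shows "(\<Sum>g\<in>factor_grid th b n1 n2 n3 r. exp (- factor_penalty th h n1 n2 n3 r (snd g))) \<le> 1"
proof -
  define W where "W = 1 + real th * exp (- h)"
  define K where "K = real th ^ (n1 * r * n3) * W ^ (r * n2 * n3)"
  let ?GA = "PiE (box n1 r n3) (\<lambda>_. levels th 1)" and ?GB = "PiE (box r n2 n3) (\<lambda>_. levels th b)"
  let ?f = "\<lambda>B. exp (- h * real (card {e \<in> box r n2 n3. B e \<noteq> 0}))"
  have W: "W > 0"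
    by (simp add: W_def add_pos_nonneg)
  have K: "K > 0"
    using assms W by (simp add: K_def)
  have exp_penalty: "exp (- factor_penalty th h n1 n2 n3 r B) = ?f B / K" for B
    unfolding K_def W_def using assms by (rule exp_neg_factor_penalty)
  have "(\<Sum>g\<in>factor_grid th b n1 n2 n3 r. exp (- factor_penalty th h n1 n2 n3 r (snd g)))
      = real (card ?GA) * (\<Sum>B\<in>?GB. ?f B) / K"
  proof -
    have "(\<Sum>g\<in>?GA \<times> ?GB. ?f (snd g)) = (\<Sum>(A, B)\<in>?GA \<times> ?GB. ?f B)"
      by (simp add: split_def)
    also have "\<dots> = (\<Sum>A\<in>?GA. \<Sum>B\<in>?GB. ?f B)"
      by (rule sum.cartesian_product[symmetric])
    finally show ?thesis
      by (simp add: factor_grid_def exp_penalty sum_divide_distrib[symmetric])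
  qed
  also have "\<dots> \<le> real th ^ (n1 * r * n3) * W ^ (r * n2 * n3) / K"
  proof (intro divide_right_mono mult_mono)
    show "real (card ?GA) \<le> real th ^ (n1 * r * n3)"
      by (simp add: card_PiE card_box power_mono card_levels_le flip: of_nat_power)
    have "real (card (levels th b - {0})) \<le> real th"
      using card_levels_le[of th b] card_Diff1_le[of "levels th b" 0] by simp
    then show "(\<Sum>B\<in>?GB. ?f B) \<le> W ^ (r * n2 * n3)"
      unfolding W_def using sum_PiE_exp_neg_card_nonzero_le[of "box r n2 n3" "levels th b"]
      by (simp add: card_box)
  qed (use K in \<open>auto intro: sum_nonneg\<close>)
  also have "\<dots> = 1"
    using K unfolding K_def[symmetric] by simp
  finally show ?thesis .
qed

(* Restricting factor pairs to their index boxes makes the class of candidates finite. *)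
definition factor_entries :: "nat \<Rightarrow> nat \<Rightarrow> nat \<Rightarrow> nat \<Rightarrow> tensor \<times> tensor
    \<Rightarrow> (nat \<times> nat \<times> nat \<Rightarrow> real) \<times> (nat \<times> nat \<times> nat \<Rightarrow> real)" where
  "factor_entries n1 n2 n3 r AB =
     (restrict (tensor_entry (fst AB)) (box n1 r n3), restrict (tensor_entry (snd AB)) (box r n2 n3))"

lemma factor_entries_mem_factor_grid:
  assumes "AB \<in> Gam th b c n1 n2 n3 r" "th \<ge> 1"
  shows "factor_entries n1 n2 n3 r AB \<in> factor_grid th b n1 n2 n3 r"
  using assms zero_mem_levels[of th b]
  by (fastforce simp: factor_entries_def factor_grid_def Gam_def LL_def DD_def tensor_entry_def)

lemma card_nonzero_factor_entries:
  "card {e \<in> box r n2 n3. snd (factor_entries n1 n2 n3 r AB) e \<noteq> 0} = l0norm r n2 n3 (snd AB)"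
  unfolding l0norm_def factor_entries_def tensor_entry_def
  by (intro arg_cong[where f = card]) auto

lemma objective_masked_observation:
  fixes X :: tensor and \<omega> :: "nat \<times> nat \<times> nat \<Rightarrow> bool \<times> real" and n1 n2 n3 :: nat
  assumes "\<tau> > 0"
  defines "Om \<equiv> {e \<in> box n1 n2 n3. fst (\<omega> e)}"
    and "Y \<equiv> \<lambda>e. tensor_entry X e + snd (\<omega> e)"
  shows "objective n1 n2 n3 r \<tau> lam Om (restrict Y Om) AB
      = (\<Sum>e\<in>box n1 n2 n3. log_lik_ratio \<tau>
            (tensor_entry (tprod r n3 (fst AB) (snd AB)) e - tensor_entry X e) (\<omega> e))
        + (\<Sum>e\<in>Om. \<bar>snd (\<omega> e)\<bar> / \<tau> + ln (2 * \<tau>)) + lam * real (l0norm r n2 n3 (snd AB))"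
proof -
  let ?d = "\<lambda>e. tensor_entry (tprod r n3 (fst AB) (snd AB)) e - tensor_entry X e"
  have finite_Om: "finite Om"
    unfolding Om_def by simp
  have dens_ne_0: "laplace_dens \<tau> x y \<noteq> 0" for x y
    using laplace_dens_pos[OF assms(1)] by (metis less_irrefl)
  have "- ln (\<Prod>(i, j, k)\<in>Om. laplace_dens \<tau> (tprod r n3 (fst AB) (snd AB) i j k) (restrict Y Om (i, j, k)))
      = (\<Sum>e\<in>Om. \<bar>snd (\<omega> e) - ?d e\<bar> / \<tau> + ln (2 * \<tau>))"
    using assms finite_Om dens_ne_0
    by (subst ln_prod) (auto simp: laplace_dens_pos ln_laplace_dens Y_def tensor_entry_def
        sum_negf[symmetric] split_def intro!: sum.cong)
  also have "\<dots> = (\<Sum>e\<in>box n1 n2 n3. log_lik_ratio \<tau> (?d e) (\<omega> e))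
      + (\<Sum>e\<in>Om. \<bar>snd (\<omega> e)\<bar> / \<tau> + ln (2 * \<tau>))"
    by (simp add: Om_def log_lik_ratio_def sum.inter_filter[symmetric] sum.distrib[symmetric]
        diff_divide_distrib)
  finally show ?thesis
    by (simp add: objective_def Let_def)
qed

lemma factor_penalty_factor_entries:
  "factor_penalty th h n1 n2 n3 r (snd (factor_entries n1 n2 n3 r AB))
    = real (n1 * r * n3) * ln (real th) + real (r * n2 * n3) * ln (1 + real th * exp (- h))
      + h * real (l0norm r n2 n3 (snd AB))"
  unfolding factor_penalty_def using card_nonzero_factor_entries by simp

definition factor_dev :: "nat \<Rightarrow> nat \<Rightarrow> tensor
    \<Rightarrow> (nat \<times> nat \<times> nat \<Rightarrow> real) \<times> (nat \<times> nat \<times> nat \<Rightarrow> real) \<Rightarrow> nat \<times> nat \<times> nat \<Rightarrow> real" where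
  "factor_dev r n3 X g e = tensor_entry (tprod r n3 (tensor_of (fst g)) (tensor_of (snd g))) e - tensor_entry X e"

lemma factor_dev_factor_entries:
  assumes "e \<in> box n1 n2 n3"
  shows "factor_dev r n3 X (factor_entries n1 n2 n3 r AB) e
      = tensor_entry (tprod r n3 (fst AB) (snd AB)) e - tensor_entry X e"
  using assms unfolding factor_dev_def tprod_def tensor_entry_def
  by (auto simp: factor_entries_def tensor_of_def tensor_entry_def box_def intro!: sum.cong)

lemma frob2_eq_sum_factor_dev:
  "frob2 n1 n2 n3 (\<lambda>i j k. tprod r n3 (fst AB) (snd AB) i j k - X i j k)
    = (\<Sum>e\<in>box n1 n2 n3. (factor_dev r n3 X (factor_entries n1 n2 n3 r AB) e)\<^sup>2)"
  unfolding frob2_def by (auto simp: factor_dev_factor_entries tensor_entry_def intro!: sum.cong)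

lemma penalized_log_lik_ratio_le_of_objective_le:
  fixes X :: tensor and \<omega> :: "nat \<times> nat \<times> nat \<Rightarrow> bool \<times> real" and n1 n2 n3 :: nat
  defines "Om \<equiv> {e \<in> box n1 n2 n3. fst (\<omega> e)}"
    and "Y \<equiv> \<lambda>e. tensor_entry X e + snd (\<omega> e)"
  assumes "\<tau> > 0"
    and "objective n1 n2 n3 r \<tau> lam Om (restrict Y Om) AB \<le> objective n1 n2 n3 r \<tau> lam Om (restrict Y Om) AB'"
  shows "(\<Sum>e\<in>box n1 n2 n3. log_lik_ratio \<tau> (factor_dev r n3 X (factor_entries n1 n2 n3 r AB) e) (\<omega> e)) / 2
        + factor_penalty th (lam / 2) n1 n2 n3 r (snd (factor_entries n1 n2 n3 r AB))
      \<le> (\<Sum>e\<in>box n1 n2 n3. log_lik_ratio \<tau> (factor_dev r n3 X (factor_entries n1 n2 n3 r AB') e) (\<omega> e)) / 2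
        + factor_penalty th (lam / 2) n1 n2 n3 r (snd (factor_entries n1 n2 n3 r AB'))"
proof -
  have "(\<Sum>e\<in>box n1 n2 n3. log_lik_ratio \<tau> (factor_dev r n3 X (factor_entries n1 n2 n3 r AB) e) (\<omega> e))
      = (\<Sum>e\<in>box n1 n2 n3. log_lik_ratio \<tau>
          (tensor_entry (tprod r n3 (fst AB) (snd AB)) e - tensor_entry X e) (\<omega> e))" for AB
    by (intro sum.cong refl) (simp add: factor_dev_factor_entries)
  then show ?thesis
    using assms(4) unfolding Om_def Y_def objective_masked_observation[OF assms(3)]
    by (simp add: factor_penalty_factor_entries)
qed

theorem sparse_factor_risk_bound:
  fixes n1 n2 n3 r th :: nat and b c \<tau> \<gamma> lam :: real and Astar Bstar A' B' :: tensor
    and est :: "(nat \<times> nat \<times> nat) set \<Rightarrow> (nat \<times> nat \<times> nat \<Rightarrow> real) \<Rightarrow> tensor \<times> tensor"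
  defines "M \<equiv> PiM (box n1 n2 n3) (\<lambda>_. masked_laplace \<gamma> \<tau>)"
    and "err \<equiv> (\<lambda>\<omega>. let Om = {x \<in> box n1 n2 n3. fst (\<omega> x)};
                        Y = (\<lambda>x. (case x of (i,j,k) \<Rightarrow> tprod r n3 Astar Bstar i j k) + snd (\<omega> x));
                        AB = est Om (restrict Y Om)
                    in frob2 n1 n2 n3 (\<lambda>i j k. tprod r n3 (fst AB) (snd AB) i j k - tprod r n3 Astar Bstar i j k))"
  assumes th: "th \<ge> 1" and \<gamma>: "0 \<le> \<gamma>" "\<gamma> \<le> 1" and \<tau>: "\<tau> > 0"
    and Xstar: "\<forall>(i, j, k) \<in> box n1 n2 n3.
      0 \<le> tprod r n3 Astar Bstar i j k \<and> tprod r n3 Astar Bstar i j k \<le> c"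
    and est: "\<forall>Om Y. Om \<subseteq> box n1 n2 n3 \<longrightarrow> est Om Y \<in> Gam th b c n1 n2 n3 r \<and>
      (\<forall>AB \<in> Gam th b c n1 n2 n3 r.
         objective n1 n2 n3 r \<tau> lam Om Y (est Om Y) \<le> objective n1 n2 n3 r \<tau> lam Om Y AB)"
    and AB': "(A', B') \<in> Gam th b c n1 n2 n3 r"
    and err_measurable: "err \<in> borel_measurable M"
  shows "\<gamma> / (2 * (2 * \<tau> + c)\<^sup>2) * (\<integral>\<omega>. err \<omega> \<partial>M)
      \<le> \<gamma> * frob2 n1 n2 n3 (\<lambda>i j k. tprod r n3 A' B' i j k - tprod r n3 Astar Bstar i j k) / (2 * \<tau>\<^sup>2)
        + real (n1 * r * n3) * ln (real th) + real (r * n2 * n3) * ln (1 + real th * exp (- lam / 2))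
        + lam / 2 * real (l0norm r n2 n3 B')"
proof -
  define Xs where "Xs = tprod r n3 Astar Bstar"
  define Om where "Om \<omega> = {x \<in> box n1 n2 n3. fst (\<omega> x)}" for \<omega> :: "nat \<times> nat \<times> nat \<Rightarrow> bool \<times> real"
  define Y where "Y \<omega> = (\<lambda>x. tensor_entry Xs x + snd (\<omega> x))" for \<omega> :: "nat \<times> nat \<times> nat \<Rightarrow> bool \<times> real"
  define fit where "fit \<omega> = est (Om \<omega>) (restrict (Y \<omega>) (Om \<omega>))" for \<omega>
  let ?sel = "\<lambda>\<omega>. factor_entries n1 n2 n3 r (fit \<omega>)" and ?dev = "factor_dev r n3 Xs"
    and ?pen = "\<lambda>g. factor_penalty th (lam / 2) n1 n2 n3 r (snd g)"
  have fit: "fit \<omega> \<in> Gam th b c n1 n2 n3 r"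
    and fit_min: "objective n1 n2 n3 r \<tau> lam (Om \<omega>) (restrict (Y \<omega>) (Om \<omega>)) (fit \<omega>)
      \<le> objective n1 n2 n3 r \<tau> lam (Om \<omega>) (restrict (Y \<omega>) (Om \<omega>)) (A', B')" for \<omega>
    using est AB' unfolding fit_def by (auto simp: Om_def)
  have err_eq: "err \<omega> = (\<Sum>e\<in>box n1 n2 n3. (?dev (?sel \<omega>) e)\<^sup>2)" for \<omega>
    unfolding frob2_eq_sum_factor_dev[symmetric]
    by (simp add: err_def Let_def fit_def Om_def Y_def tensor_entry_def Xs_def)
  have bounded: "\<bar>?dev (?sel \<omega>) e\<bar> \<le> c" if "e \<in> box n1 n2 n3" for \<omega> e
    using fit[of \<omega>] Xstar that by (fastforce simp: factor_dev_factor_entries Gam_def Xs_def tensor_entry_def)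
  have "\<gamma> / (2 * (2 * \<tau> + c)\<^sup>2) * (\<integral>\<omega>. (\<Sum>e\<in>box n1 n2 n3. (?dev (?sel \<omega>) e)\<^sup>2) \<partial>M)
      \<le> \<gamma> * (\<Sum>e\<in>box n1 n2 n3. (?dev (factor_entries n1 n2 n3 r (A', B')) e)\<^sup>2) / (2 * \<tau>\<^sup>2)
        + ?pen (factor_entries n1 n2 n3 r (A', B'))"
    unfolding M_def
  proof (rule penalized_mle_risk_bound[where G = "factor_grid th b n1 n2 n3 r"])
    show "(\<Sum>g\<in>factor_grid th b n1 n2 n3 r. exp (- ?pen g)) \<le> 1"
      using th by (rule factor_grid_kraft)
    show "?sel \<omega> \<in> factor_grid th b n1 n2 n3 r" for \<omega>
      using fit th by (rule factor_entries_mem_factor_grid)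
    show "(\<Sum>e\<in>box n1 n2 n3. log_lik_ratio \<tau> (?dev (?sel \<omega>) e) (\<omega> e)) / 2 + ?pen (?sel \<omega>)
        \<le> (\<Sum>e\<in>box n1 n2 n3. log_lik_ratio \<tau> (?dev (factor_entries n1 n2 n3 r (A', B')) e) (\<omega> e)) / 2
          + ?pen (factor_entries n1 n2 n3 r (A', B'))" for \<omega>
      using \<tau> fit_min[of \<omega>, unfolded Om_def Y_def] by (rule penalized_log_lik_ratio_le_of_objective_le)
    show "(\<lambda>\<omega>. \<Sum>e\<in>box n1 n2 n3. (?dev (?sel \<omega>) e)\<^sup>2)
        \<in> borel_measurable (PiM (box n1 n2 n3) (\<lambda>_. masked_laplace \<gamma> \<tau>))"
      using err_measurable unfolding M_def err_eq[abs_def] .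
  qed (use \<gamma> \<tau> bounded in \<open>auto simp: finite_factor_grid\<close>)
  then show ?thesis
    using frob2_eq_sum_factor_dev[where AB = "(A', B')"]
    by (simp add: err_eq Xs_def factor_penalty_factor_entries)
qed

section \<open>Quantization\<close>

definition level_floor :: "nat \<Rightarrow> real \<Rightarrow> real \<Rightarrow> real" where
  "level_floor th u x = u * real (nat \<lfloor>x * real (th - 1) / u\<rfloor>) / real (th - 1)"

lemma level_floor_0 [simp]: "level_floor th u 0 = 0"
  by (simp add: level_floor_def)

lemma level_floor:
  assumes "u > 0" "th \<ge> 2" "0 \<le> x" "x \<le> u"
  shows "level_floor th u x \<in> levels th u" and "0 \<le> level_floor th u x"
    and "level_floor th u x \<le> x" and "x - level_floor th u x \<le> u / (real th - 1)"
proof -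
  define T where "T = real th - 1"
  define t where "t = nat \<lfloor>x * T / u\<rfloor>"
  have T: "T \<ge> 1" and T_eq: "real (th - 1) = T"
    using assms(2) by (auto simp: T_def of_nat_diff)
  have lf: "level_floor th u x = u * real t / T"
    unfolding level_floor_def t_def T_eq ..
  have "x * T / u \<ge> 0" and "x * T / u \<le> T"
    using assms T by (auto simp: field_simps mult_right_mono)
  then have t_le: "real t \<le> x * T / u" and t_gt: "x * T / u - 1 < real t"
    by (auto simp: t_def)
  then have "real t \<le> T"
    using \<open>x * T / u \<le> T\<close> by linarith
  then have "t < th"
    by (simp add: T_def)
  then show "level_floor th u x \<in> levels th u"
    unfolding levels_def lf T_eq[symmetric] by blast
  show "0 \<le> level_floor th u x"
    using assms T by (simp add: lf)
  have "u * real t / T \<le> u * (x * T / u) / T"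
    using t_le assms T by (intro divide_right_mono mult_left_mono) auto
  then show "level_floor th u x \<le> x"
    using assms T by (simp add: lf)
  have "u * (x * T / u - 1) / T \<le> u * real t / T"
    using t_gt assms T by (intro divide_right_mono mult_left_mono) auto
  moreover have "u * (x * T / u - 1) / T = x - u / T"
    using assms T by (simp add: field_simps)
  ultimately show "x - level_floor th u x \<le> u / (real th - 1)"
    by (simp add: lf T_def)
qed

lemma mult_sub_mult_le:
  fixes a a' x x' :: real
  assumes "0 \<le> a'" "a' \<le> a" "a \<le> 1" "0 \<le> x'" "x' \<le> x" "x \<le> b" "a - a' \<le> \<epsilon>" "x - x' \<le> \<delta>"
  shows "a * x - a' * x' \<le> \<epsilon> * b + \<delta>"
proof -
  have "a * x - a' * x' = (a - a') * x + a' * (x - x')"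
    by (simp add: algebra_simps)
  also have "\<dots> \<le> \<epsilon> * b + 1 * \<delta>"
    using assms by (intro add_mono mult_mono) auto
  finally show ?thesis
    by simp
qed

lemma tprod_sub_tprod_le:
  fixes A A' B B' :: tensor
  assumes A: "\<And>l k. l < r \<Longrightarrow> k < n3 \<Longrightarrow>
      0 \<le> A' i l k \<and> A' i l k \<le> A i l k \<and> A i l k \<le> 1 \<and> A i l k - A' i l k \<le> \<epsilon>"
    and B: "\<And>l k. l < r \<Longrightarrow> k < n3 \<Longrightarrow>
      0 \<le> B' l j k \<and> B' l j k \<le> B l j k \<and> B l j k \<le> b \<and> B l j k - B' l j k \<le> \<delta>"
  shows "0 \<le> tprod r n3 A' B' i j k" and "tprod r n3 A' B' i j k \<le> tprod r n3 A B i j k"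
    and "tprod r n3 A B i j k - tprod r n3 A' B' i j k \<le> real n3 * real r * (\<epsilon> * b + \<delta>)"
proof -
  let ?a = "\<lambda>q l. A i l ((k + n3 - q) mod n3)" and ?a' = "\<lambda>q l. A' i l ((k + n3 - q) mod n3)"
  have summand: "0 \<le> ?a' q l * B' l j q \<and> ?a' q l * B' l j q \<le> ?a q l * B l j q
      \<and> ?a q l * B l j q - ?a' q l * B' l j q \<le> \<epsilon> * b + \<delta>" if "q < n3" "l < r" for q l
  proof -
    have "(k + n3 - q) mod n3 < n3"
      using that by simp
    then show ?thesis
      using A[of l "(k + n3 - q) mod n3"] B[of l q] that
      by (auto intro: mult_mono mult_sub_mult_le)
  qed
  show "0 \<le> tprod r n3 A' B' i j k"
    unfolding tprod_def using summand by (intro sum_nonneg) auto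
  show "tprod r n3 A' B' i j k \<le> tprod r n3 A B i j k"
    unfolding tprod_def using summand by (intro sum_mono) auto
  have "tprod r n3 A B i j k - tprod r n3 A' B' i j k
      = (\<Sum>q<n3. \<Sum>l<r. ?a q l * B l j q - ?a' q l * B' l j q)"
    by (simp add: tprod_def sum_subtractf)
  also have "\<dots> \<le> (\<Sum>q<n3. \<Sum>l<r. \<epsilon> * b + \<delta>)"
    using summand by (intro sum_mono) auto
  finally show "tprod r n3 A B i j k - tprod r n3 A' B' i j k \<le> real n3 * real r * (\<epsilon> * b + \<delta>)"
    by simp
qed

lemma frob2_le_of_abs_le:
  assumes "\<And>i j k. (i, j, k) \<in> box n1 n2 n3 \<Longrightarrow> \<bar>X i j k\<bar> \<le> \<delta>"
  shows "frob2 n1 n2 n3 X \<le> real (n1 * n2 * n3) * \<delta>\<^sup>2"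
proof -
  have "frob2 n1 n2 n3 X \<le> (\<Sum>e\<in>box n1 n2 n3. \<delta>\<^sup>2)"
    unfolding frob2_def using assms
    by (intro sum_mono) (clarsimp, metis abs_ge_zero power2_abs power_mono)
  then show ?thesis
    by (simp add: card_box)
qed

lemma quantized_factors:
  fixes Astar Bstar :: tensor
  assumes "th \<ge> 2" "b > 0"
    and Astar: "\<forall>(i, l, k) \<in> box n1 r n3. 0 \<le> Astar i l k \<and> Astar i l k \<le> 1"
    and Bstar: "\<forall>(l, j, k) \<in> box r n2 n3. 0 \<le> Bstar l j k \<and> Bstar l j k \<le> b"
    and Xstar: "\<forall>(i, j, k) \<in> box n1 n2 n3.
      0 \<le> tprod r n3 Astar Bstar i j k \<and> tprod r n3 Astar Bstar i j k \<le> c"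
  obtains A' B' where "(A', B') \<in> Gam th b c n1 n2 n3 r"
    and "frob2 n1 n2 n3 (\<lambda>i j k. tprod r n3 A' B' i j k - tprod r n3 Astar Bstar i j k)
      \<le> real (n1 * n2 * n3) * (2 * real r * real n3 * b / (real th - 1))\<^sup>2"
    and "l0norm r n2 n3 B' \<le> l0norm r n2 n3 Bstar"
proof
  define A' where "A' i l k = level_floor th 1 (Astar i l k)" for i l k
  define B' where "B' l j k = level_floor th b (Bstar l j k)" for l j k
  define \<delta> where "\<delta> = 2 * real r * real n3 * b / (real th - 1)"
  have A': "0 \<le> A' i l k \<and> A' i l k \<le> Astar i l k \<and> Astar i l k \<le> 1
      \<and> Astar i l k - A' i l k \<le> 1 / (real th - 1) \<and> A' i l k \<in> levels th 1"
    if "(i, l, k) \<in> box n1 r n3" for i l k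
    using Astar that level_floor[of 1 th "Astar i l k"] assms(1) by (auto simp: A'_def)
  have B': "0 \<le> B' l j k \<and> B' l j k \<le> Bstar l j k \<and> Bstar l j k \<le> b
      \<and> Bstar l j k - B' l j k \<le> b / (real th - 1) \<and> B' l j k \<in> levels th b
      \<and> (Bstar l j k = 0 \<longrightarrow> B' l j k = 0)"
    if "(l, j, k) \<in> box r n2 n3" for l j k
    using Bstar that level_floor[of b th "Bstar l j k"] assms(1,2) by (auto simp: B'_def)
  have X': "0 \<le> tprod r n3 A' B' i j k \<and> tprod r n3 A' B' i j k \<le> tprod r n3 Astar Bstar i j k
      \<and> tprod r n3 Astar Bstar i j k - tprod r n3 A' B' i j k \<le> \<delta>"
    if "(i, j, k) \<in> box n1 n2 n3" for i j k
  proof -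
    have "real n3 * real r * (1 / (real th - 1) * b + b / (real th - 1)) = \<delta>"
      by (simp add: \<delta>_def field_simps)
    then show ?thesis
      using tprod_sub_tprod_le[of r n3 A' i Astar "1 / (real th - 1)" B' j Bstar b "b / (real th - 1)" k]
        A' B' that by (auto simp: box_def)
  qed
  show "(A', B') \<in> Gam th b c n1 n2 n3 r"
    using A' B' X' Xstar by (fastforce simp: Gam_def LL_def DD_def)
  show "frob2 n1 n2 n3 (\<lambda>i j k. tprod r n3 A' B' i j k - tprod r n3 Astar Bstar i j k)
      \<le> real (n1 * n2 * n3) * \<delta>\<^sup>2"
    using X' by (intro frob2_le_of_abs_le) auto
  show "l0norm r n2 n3 B' \<le> l0norm r n2 n3 Bstar"
    unfolding l0norm_def using B' by (intro card_mono finite_subset[OF _ finite_box[of r n2 n3]]) auto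
qed

section \<open>The choice of beta, theta and lambda\<close>

lemma beta_of_ge_3: "beta_of n1 n2 n3 r b c \<ge> 3"
  by (simp add: beta_of_def)

lemma theta_pos: "theta \<beta> n1 n2 > 0"
  by (simp add: theta_def)

lemma theta_bounds:
  assumes "\<beta> \<ge> 0" "max n1 n2 > 0"
  shows "real (max n1 n2) powr \<beta> \<le> real (theta \<beta> n1 n2)"
    and "real (theta \<beta> n1 n2) \<le> 2 * real (max n1 n2) powr \<beta>"
proof -
  define n where "n = real (max n1 n2)"
  define x where "x = \<beta> * log 2 n"
  have n: "n \<ge> 1"
    using assms(2) by (simp add: n_def)
  have "x \<ge> 0"
    using assms(1) n by (simp add: x_def)
  then have x_le: "x \<le> real (nat \<lceil>x\<rceil>)" and le_x: "real (nat \<lceil>x\<rceil>) \<le> x + 1"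
    by linarith+
  have theta_eq: "real (theta \<beta> n1 n2) = 2 powr real (nat \<lceil>x\<rceil>)"
    by (simp add: theta_def x_def n_def powr_realpow)
  have "2 powr x = (2 powr log 2 n) powr \<beta>"
    by (simp add: x_def powr_powr mult.commute)
  then have two_powr_x: "2 powr x = n powr \<beta>"
    using n by simp
  show "real (max n1 n2) powr \<beta> \<le> real (theta \<beta> n1 n2)"
    using x_le by (simp add: theta_eq flip: n_def two_powr_x)
  have "2 powr real (nat \<lceil>x\<rceil>) \<le> 2 powr (x + 1)"
    using le_x by simp
  then show "real (theta \<beta> n1 n2) \<le> 2 * real (max n1 n2) powr \<beta>"
    by (simp add: theta_eq powr_add flip: n_def two_powr_x)
qed

lemma theta_ge_8:
  assumes "max n1 n2 \<ge> 2" "\<beta> \<ge> 3"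
  shows "real (theta \<beta> n1 n2) \<ge> 8"
proof -
  have "(8::real) = 2 powr 3"
    by simp
  also have "\<dots> \<le> real (max n1 n2) powr \<beta>"
    using assms by (intro order.trans[OF powr_mono2 powr_mono]) auto
  also have "\<dots> \<le> real (theta \<beta> n1 n2)"
    using assms by (intro theta_bounds) auto
  finally show ?thesis .
qed

lemma mult_le_powr_of_exponent_ge:
  fixes n q \<beta> :: real
  assumes "n > 1" "q > 0" "\<beta> \<ge> 1 + ln q / ln n"
  shows "n * q \<le> n powr \<beta>"
proof -
  have "ln n > 0"
    using assms(1) by simp
  then have "(1 + ln q / ln n) * ln n \<le> \<beta> * ln n"
    using assms(3) by (intro mult_right_mono) auto
  moreover have "(1 + ln q / ln n) * ln n = ln (n * q)"
    using \<open>ln n > 0\<close> assms(1,2) by (simp add: ln_mult field_simps)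
  ultimately have "ln (n * q) \<le> \<beta> * ln n"
    by simp
  then have "exp (ln (n * q)) \<le> exp (\<beta> * ln n)"
    by simp
  then show ?thesis
    using assms(1,2) by (simp add: powr_def)
qed

(* The lower bound on beta is what makes theta exceed n * 3 r n3^(3/2) b / c, so that the grid step is small. *)
lemma quantization_step_sq_le:
  assumes "max n1 n2 \<ge> 2" "n3 > 0" "r > 0" "b > 0" "c > 0"
  defines "\<theta> \<equiv> theta (beta_of n1 n2 n3 r b c) n1 n2"
  shows "(2 * real r * real n3 * b / (real \<theta> - 1))\<^sup>2 \<le> 16 * c\<^sup>2 / (9 * (real (max n1 n2))\<^sup>2 * real n3)"
proof -
  define n where "n = real (max n1 n2)"
  define Q where "Q = real n3 powr 1.5"
  have n: "n \<ge> 2" and Q: "Q > 0" and Q2: "Q\<^sup>2 = real n3 ^ 3"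
    using assms(1,2) by (auto simp: n_def Q_def power2_eq_square powr_add[symmetric] powr_numeral)
  have \<theta>: "real \<theta> \<ge> 8"
    unfolding \<theta>_def using assms(1) beta_of_ge_3 by (rule theta_ge_8)
  have "n * (3 * real r * Q * b / c) \<le> n powr beta_of n1 n2 n3 r b c"
    using n Q assms(3-5)
    by (intro mult_le_powr_of_exponent_ge) (auto simp: beta_of_def n_def Q_def)
  also have "\<dots> \<le> real \<theta>"
    unfolding \<theta>_def n_def using assms(1) by (intro theta_bounds) (auto intro: order.trans[OF _ beta_of_ge_3])
  finally have \<theta>_ge: "n * (3 * real r * Q * b / c) \<le> real \<theta>" .
  have "2 * real r * real n3 * b / (real \<theta> - 1) \<le> 4 * real r * real n3 * b / real \<theta>"
    using \<theta> assms(2-4) by (simp add: field_simps)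
  also have "\<dots> \<le> 4 * real r * real n3 * b / (n * (3 * real r * Q * b / c))"
    using \<theta>_ge \<theta> n Q assms(2-5) by (intro divide_left_mono) (auto intro!: mult_pos_pos)
  also have "\<dots> = 4 * c * real n3 / (3 * n * Q)"
    using n Q assms(3-5) by (simp add: field_simps)
  finally have "(2 * real r * real n3 * b / (real \<theta> - 1))\<^sup>2 \<le> (4 * c * real n3 / (3 * n * Q))\<^sup>2"
    using \<theta> assms(2-4) by (intro power_mono) auto
  also have "\<dots> = 16 * c\<^sup>2 * (real n3)\<^sup>2 / (9 * n\<^sup>2 * real n3 ^ 3)"
    by (simp add: power_mult_distrib power_divide Q2)
  also have "\<dots> = 16 * c\<^sup>2 / (9 * n\<^sup>2 * real n3)"
    using n assms(2) by (simp add: field_simps power2_eq_square power3_eq_cube)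
  finally show ?thesis
    by (simp add: n_def)
qed

lemma quantization_term_le:
  assumes "n1 \<ge> 2" "n2 \<ge> 2" "n3 > 0" "r > 0" "b > 0" "c > 0" "4 \<le> m" "m \<le> n1 * n2 * n3"
  defines "\<theta> \<equiv> theta (beta_of n1 n2 n3 r b c) n1 n2"
  shows "real m * (2 * real r * real n3 * b / (real \<theta> - 1))\<^sup>2 \<le> 3 * c\<^sup>2 * ln (real m)"
proof -
  define n where "n = real (max n1 n2)"
  have n: "n \<ge> 2"
    using assms(1) by (simp add: n_def)
  have "real m \<le> n\<^sup>2 * real n3"
  proof -
    have "real n1 * real n2 \<le> n * n"
      by (intro mult_mono) (auto simp: n_def)
    then show ?thesis
      using assms(8) mult_right_mono[of "real n1 * real n2" "n * n" "real n3"]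
      by (simp add: power2_eq_square flip: of_nat_mult)
  qed
  then have "real m * (2 * real r * real n3 * b / (real \<theta> - 1))\<^sup>2
      \<le> n\<^sup>2 * real n3 * (16 * c\<^sup>2 / (9 * n\<^sup>2 * real n3))"
    using quantization_step_sq_le[of n1 n2 n3 r b c] assms(1,3-6)
    by (intro mult_mono) (auto simp: \<theta>_def n_def)
  also have "\<dots> = 16 / 9 * c\<^sup>2"
    using n assms(3) by (simp add: field_simps)
  also have "\<dots> \<le> 3 * c\<^sup>2 * ln (real m)"
  proof -
    have "ln (4::real) \<le> ln (real m)"
      using assms(7) by simp
    moreover have "ln (4::real) = 2 * ln 2"
      using ln_realpow[of 2 2] by simp
    ultimately have "16 / 9 \<le> 3 * ln (real m)"
      using ln2_ge_two_thirds by linarith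
    then have "c\<^sup>2 * (16 / 9) \<le> c\<^sup>2 * (3 * ln (real m))"
      by (intro mult_left_mono) auto
    then show ?thesis
      by (simp add: mult_ac)
  qed
  finally show ?thesis .
qed

lemma lam_of_half_bounds:
  assumes "\<beta> \<ge> -2" "max n1 n2 \<ge> 1"
  shows "2 * (\<beta> + 2) * ln (real (max n1 n2)) \<le> lam_of n1 n2 \<beta> c \<tau> / 2"
    and "lam_of n1 n2 \<beta> c \<tau> / 2 \<le> (3 + c\<^sup>2 / \<tau>\<^sup>2) * (\<beta> + 2) * ln (real (max n1 n2))"
proof -
  define \<kappa> where "\<kappa> = c\<^sup>2 / (2 * \<tau>\<^sup>2)"
  define L where "L = ln (real (max n1 n2))"
  have \<kappa>: "\<kappa> \<ge> 0" and L: "L \<ge> 0" and \<beta>: "\<beta> + 2 \<ge> 0"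
    using assms by (auto simp: \<kappa>_def L_def)
  have lam: "lam_of n1 n2 \<beta> c \<tau> / 2 = (\<beta> + 2) * L * (2 + 4 * \<kappa> / 3)"
    unfolding lam_of_def Let_def \<kappa>_def[symmetric] L_def[symmetric] by (simp add: algebra_simps)
  have t: "c\<^sup>2 / \<tau>\<^sup>2 = 2 * \<kappa>"
    by (simp add: \<kappa>_def)
  have "2 * (\<beta> + 2) * L \<le> (\<beta> + 2) * L * (2 + 4 * \<kappa> / 3)"
    using mult_left_mono[of 2 "2 + 4 * \<kappa> / 3" "(\<beta> + 2) * L"] \<kappa> L \<beta> by (simp add: mult_ac)
  then show "2 * (\<beta> + 2) * ln (real (max n1 n2)) \<le> lam_of n1 n2 \<beta> c \<tau> / 2"
    by (simp only: lam L_def)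
  have "(\<beta> + 2) * L * (2 + 4 * \<kappa> / 3) \<le> (3 + 2 * \<kappa>) * (\<beta> + 2) * L"
    using mult_left_mono[of "2 + 4 * \<kappa> / 3" "3 + 2 * \<kappa>" "(\<beta> + 2) * L"] \<kappa> L \<beta>
    by (simp add: mult_ac)
  then show "lam_of n1 n2 \<beta> c \<tau> / 2 \<le> (3 + c\<^sup>2 / \<tau>\<^sup>2) * (\<beta> + 2) * ln (real (max n1 n2))"
    by (simp only: lam t L_def)
qed

lemma max_mult_theta_exp_neg_lam_le_1:
  assumes "max n1 n2 \<ge> 2" "\<beta> \<ge> 0"
  shows "real (max n1 n2) * (real (theta \<beta> n1 n2) * exp (- lam_of n1 n2 \<beta> c \<tau> / 2)) \<le> 1"
proof -
  define n where "n = real (max n1 n2)"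
  have n: "n \<ge> 2"
    using assms(1) by (simp add: n_def)
  have "exp (- lam_of n1 n2 \<beta> c \<tau> / 2) \<le> exp (- (2 * (\<beta> + 2) * ln n))"
    using lam_of_half_bounds(1)[of \<beta> n1 n2 c \<tau>] assms by (simp add: n_def)
  also have "\<dots> = n powr (- (2 * \<beta> + 4))"
    using n by (simp add: powr_def algebra_simps)
  finally have "n * (real (theta \<beta> n1 n2) * exp (- lam_of n1 n2 \<beta> c \<tau> / 2))
      \<le> n * (2 * n powr \<beta> * n powr (- (2 * \<beta> + 4)))"
    using theta_bounds(2)[of \<beta> n1 n2] assms n
    by (intro mult_left_mono mult_mono) (auto simp: n_def)
  also have "\<dots> = 2 * n powr (- (\<beta> + 3))"
    using n by (simp add: powr_add[symmetric] powr_mult_base algebra_simps)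
  also have "\<dots> \<le> 2 * n powr (- 1)"
    using n assms(2) by (intro mult_left_mono powr_mono) auto
  also have "\<dots> \<le> 1"
    using n by (simp add: powr_minus field_simps)
  finally show ?thesis
    by (simp add: n_def)
qed

lemma ln_theta_le:
  assumes "max n1 n2 \<ge> 2" "\<beta> \<ge> 0"
  shows "ln (real (theta \<beta> n1 n2)) \<le> (\<beta> + 1) * ln (real (max n1 n2))"
proof -
  define n where "n = real (max n1 n2)"
  have n: "n \<ge> 2"
    using assms(1) by (simp add: n_def)
  have "ln (real (theta \<beta> n1 n2)) \<le> ln (2 * n powr \<beta>)"
    using theta_bounds[of \<beta> n1 n2] assms n
    by (intro ln_mono) (auto simp: n_def theta_pos)
  also have "\<dots> = ln 2 + \<beta> * ln n"
    using n by (simp add: ln_mult ln_powr)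
  also have "\<dots> \<le> (\<beta> + 1) * ln n"
    using n by (simp add: algebra_simps)
  finally show ?thesis
    by (simp add: n_def)
qed

lemma code_length_le:
  assumes "n1 \<ge> 1" "max n1 n2 \<ge> 2" and \<beta>: "\<beta> \<ge> 0"
  shows "real (n1 * r * n3) * ln (real (theta \<beta> n1 n2))
      + real (r * n2 * n3) * ln (1 + real (theta \<beta> n1 n2) * exp (- lam_of n1 n2 \<beta> c \<tau> / 2))
    \<le> (3 + c\<^sup>2 / \<tau>\<^sup>2) * (\<beta> + 2) * real (r * n1 * n3) * ln (real (max n1 n2))"
proof -
  define n where "n = real (max n1 n2)"
  define L where "L = ln n"
  define e where "e = real (theta \<beta> n1 n2) * exp (- lam_of n1 n2 \<beta> c \<tau> / 2)"
  have n: "n \<ge> 2"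
    using assms(2) by (simp add: n_def)
  then have "ln 2 \<le> L"
    by (simp add: L_def)
  then have L: "L \<ge> 2 / 3"
    using ln2_ge_two_thirds by linarith
  have ln_theta: "ln (real (theta \<beta> n1 n2)) \<le> (\<beta> + 1) * L"
    unfolding L_def n_def using assms(2) \<beta> by (intro ln_theta_le) auto
  have "real n2 * ln (1 + e) \<le> n * e"
    using ln_add_one_self_le_self[of e] by (intro mult_mono) (auto simp: e_def n_def)
  also have "\<dots> \<le> 1"
    unfolding e_def n_def using assms(2) \<beta> by (intro max_mult_theta_exp_neg_lam_le_1) auto
  also have "\<dots> \<le> 2 * real n1 * L"
  proof -
    have "1 * (2 / 3) \<le> real n1 * L"
      using assms(1) L by (intro mult_mono) auto
    then show ?thesis
      by linarith
  qed
  finally have "real (r * n2 * n3) * ln (1 + e) \<le> real (r * n3) * (2 * real n1 * L)"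
    using mult_left_mono[of "real n2 * ln (1 + e)" "2 * real n1 * L" "real (r * n3)"]
    by (simp add: mult_ac)
  moreover have "real (n1 * r * n3) * ln (real (theta \<beta> n1 n2)) \<le> real (n1 * r * n3) * ((\<beta> + 1) * L)"
    using ln_theta by (rule mult_left_mono) simp
  moreover have "(\<beta> + 3) * L \<le> (3 + c\<^sup>2 / \<tau>\<^sup>2) * (\<beta> + 2) * L"
  proof -
    have "\<beta> + 3 \<le> 3 * (\<beta> + 2)"
      using \<beta> by simp
    also have "\<dots> \<le> (3 + c\<^sup>2 / \<tau>\<^sup>2) * (\<beta> + 2)"
      using \<beta> by (intro mult_right_mono) auto
    finally have "\<beta> + 3 \<le> (3 + c\<^sup>2 / \<tau>\<^sup>2) * (\<beta> + 2)" .
    then show ?thesis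
      using L by (intro mult_right_mono) auto
  qed
  then have "real (r * n1 * n3) * ((\<beta> + 3) * L)
      \<le> real (r * n1 * n3) * ((3 + c\<^sup>2 / \<tau>\<^sup>2) * (\<beta> + 2) * L)"
    by (rule mult_left_mono) simp
  ultimately show ?thesis
    unfolding e_def n_def L_def by (simp add: algebra_simps)
qed

lemma risk_bound_terms_le:
  fixes n1 n2 n3 r m s' s :: nat and b c \<tau> F :: real
  assumes "n1 \<ge> 2" "n2 \<ge> 2" "n3 > 0" "r > 0" "b > 0" "c > 0" "4 \<le> m" "m \<le> n1 * n2 * n3" "s' \<le> s"
  defines "\<beta> \<equiv> beta_of n1 n2 n3 r b c"
  defines "\<theta> \<equiv> theta \<beta> n1 n2" and "lam \<equiv> lam_of n1 n2 \<beta> c \<tau>"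
  assumes "F \<le> real (n1 * n2 * n3) * (2 * real r * real n3 * b / (real \<theta> - 1))\<^sup>2"
  shows "real m / real (n1 * n2 * n3) * F / (2 * \<tau>\<^sup>2)
      + real (n1 * r * n3) * ln (real \<theta>) + real (r * n2 * n3) * ln (1 + real \<theta> * exp (- lam / 2))
      + lam / 2 * real s'
    \<le> 3 * c\<^sup>2 / (2 * \<tau>\<^sup>2) * ln (real m)
      + (3 + c\<^sup>2 / \<tau>\<^sup>2) * (\<beta> + 2) * (real (r * n1 * n3) + real s) * ln (real (max n1 n2))"
proof -
  have "real m / real (n1 * n2 * n3) * F
      \<le> real m / real (n1 * n2 * n3) * (real (n1 * n2 * n3) * (2 * real r * real n3 * b / (real \<theta> - 1))\<^sup>2)"
    using assms(13) by (intro mult_left_mono) auto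
  also have "\<dots> = real m * (2 * real r * real n3 * b / (real \<theta> - 1))\<^sup>2"
    using assms(1-3) by simp
  also have "\<dots> \<le> 3 * c\<^sup>2 * ln (real m)"
    unfolding \<theta>_def \<beta>_def using assms(1-8) by (rule quantization_term_le)
  finally have "real m / real (n1 * n2 * n3) * F / (2 * \<tau>\<^sup>2) \<le> 3 * c\<^sup>2 * ln (real m) / (2 * \<tau>\<^sup>2)"
    by (intro divide_right_mono) auto
  moreover have "lam / 2 * real s' \<le> (3 + c\<^sup>2 / \<tau>\<^sup>2) * (\<beta> + 2) * ln (real (max n1 n2)) * real s"
    unfolding lam_def using assms(1,9) beta_of_ge_3[of n1 n2 n3 r b c]
    by (intro mult_mono lam_of_half_bounds(2)) (auto simp: \<beta>_def)
  moreover have "real (n1 * r * n3) * ln (real \<theta>)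
      + real (r * n2 * n3) * ln (1 + real \<theta> * exp (- lam / 2))
    \<le> (3 + c\<^sup>2 / \<tau>\<^sup>2) * (\<beta> + 2) * real (r * n1 * n3) * ln (real (max n1 n2))"
    unfolding \<theta>_def lam_def using assms(1) beta_of_ge_3[of n1 n2 n3 r b c]
    by (intro code_length_le) (auto simp: \<beta>_def)
  moreover have "(3 + c\<^sup>2 / \<tau>\<^sup>2) * (\<beta> + 2) * (real (r * n1 * n3) + real s) * ln (real (max n1 n2))
      = (3 + c\<^sup>2 / \<tau>\<^sup>2) * (\<beta> + 2) * real (r * n1 * n3) * ln (real (max n1 n2))
        + (3 + c\<^sup>2 / \<tau>\<^sup>2) * (\<beta> + 2) * ln (real (max n1 n2)) * real s"
  proof -
    have "K * (a + x) * L = K * a * L + K * L * x" for K a x L :: real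
      by (simp add: algebra_simps)
    then show ?thesis .
  qed
  ultimately show ?thesis
    by simp
qed

theorem proposition2:
  fixes n1 n2 n3 r m :: nat and b c \<tau> :: real
    and Astar Bstar :: tensor
    and est :: "(nat \<times> nat \<times> nat) set \<Rightarrow> (nat \<times> nat \<times> nat \<Rightarrow> real) \<Rightarrow> tensor \<times> tensor"
  defines "Xstar \<equiv> tprod r n3 Astar Bstar"
    and "\<beta> \<equiv> beta_of n1 n2 n3 r b c"
    and "M \<equiv> PiM (box n1 n2 n3)
               (\<lambda>_. measure_pmf (bernoulli_pmf (real m / real (n1 * n2 * n3))) \<Otimes>\<^sub>M laplace_measure \<tau>)"
    and "err \<equiv> (\<lambda>\<omega>. let Om = {x \<in> box n1 n2 n3. fst (\<omega> x)};
                        Y = (\<lambda>x. (case x of (i,j,k) \<Rightarrow> tprod r n3 Astar Bstar i j k) + snd (\<omega> x));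
                        AB = est Om (restrict Y Om)
                    in frob2 n1 n2 n3 (\<lambda>i j k. tprod r n3 (fst AB) (snd AB) i j k - tprod r n3 Astar Bstar i j k))"
  assumes "n1 \<ge> 2" "n2 \<ge> 2" "n3 \<ge> 2"
    and "0 < r" "r \<le> min n1 n2"
    and "b > 0" "c > 0" "\<tau> > 0"
    and "\<forall>(i,l,k) \<in> box n1 r n3. 0 \<le> Astar i l k \<and> Astar i l k \<le> 1"
    and "\<forall>(l,j,k) \<in> box r n2 n3. 0 \<le> Bstar l j k \<and> Bstar l j k \<le> b"
    and "\<forall>(i,j,k) \<in> box n1 n2 n3. 0 \<le> Xstar i j k \<and> Xstar i j k \<le> c / 2"
    and "4 \<le> m" "m \<le> n1 * n2 * n3"
    and "\<forall>Om Y. Om \<subseteq> box n1 n2 n3 \<longrightarrow>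
           est Om Y \<in> Gam (theta \<beta> n1 n2) b c n1 n2 n3 r \<and>
           (\<forall>AB \<in> Gam (theta \<beta> n1 n2) b c n1 n2 n3 r.
              objective n1 n2 n3 r \<tau> (lam_of n1 n2 \<beta> c \<tau>) Om Y (est Om Y) \<le> objective n1 n2 n3 r \<tau> (lam_of n1 n2 \<beta> c \<tau>) Om Y AB)"
    and "err \<in> borel_measurable M"
  shows "(\<integral>\<omega>. err \<omega> \<partial>M) / real (n1 * n2 * n3)
     \<le> 3 * c^2 * (2 * \<tau> + c)^2 * ln (real m) / (real m * \<tau>^2)
       + 2 * (3 + c^2 / \<tau>^2) * (2 * \<tau> + c)^2 * (\<beta> + 2)
         * ((real (r * n1 * n3) + real (l0norm r n2 n3 Bstar)) / real m)
         * ln (real (max n1 n2))"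
proof -
  define \<gamma> where "\<gamma> = real m / real (n1 * n2 * n3)"
  define \<theta> where "\<theta> = theta \<beta> n1 n2"
  define lam where "lam = lam_of n1 n2 \<beta> c \<tau>"
  define K where "K = 2 * (2 * \<tau> + c)\<^sup>2"
  have m: "real m > 0" and "real m \<le> real (n1 * n2 * n3)"
    using \<open>4 \<le> m\<close> \<open>m \<le> n1 * n2 * n3\<close> by (simp_all only: of_nat_le_iff)
  then have \<gamma>: "0 < \<gamma>" "\<gamma> \<le> 1"
    using \<open>n1 \<ge> 2\<close> \<open>n2 \<ge> 2\<close> \<open>n3 \<ge> 2\<close> unfolding \<gamma>_def by (simp_all add: divide_le_eq_1)
  have "real \<theta> \<ge> 8"
    unfolding \<theta>_def \<beta>_def using \<open>n1 \<ge> 2\<close> beta_of_ge_3 by (intro theta_ge_8) auto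
  then have \<theta>: "\<theta> \<ge> 2"
    by linarith
  have Xstar: "\<forall>(i, j, k) \<in> box n1 n2 n3. 0 \<le> tprod r n3 Astar Bstar i j k \<and> tprod r n3 Astar Bstar i j k \<le> c"
    using assms(15) \<open>c > 0\<close> by (auto simp: Xstar_def)
  obtain A' B' where AB': "(A', B') \<in> Gam \<theta> b c n1 n2 n3 r"
    and frob: "frob2 n1 n2 n3 (\<lambda>i j k. tprod r n3 A' B' i j k - tprod r n3 Astar Bstar i j k)
      \<le> real (n1 * n2 * n3) * (2 * real r * real n3 * b / (real \<theta> - 1))\<^sup>2"
    and sparse: "l0norm r n2 n3 B' \<le> l0norm r n2 n3 Bstar"
    using \<theta> \<open>b > 0\<close> assms(13,14) Xstar by (rule quantized_factors)
  have "(\<integral>\<omega>. err \<omega> \<partial>M) / real (n1 * n2 * n3) = K / real m * (\<gamma> / K * (\<integral>\<omega>. err \<omega> \<partial>M))"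
    using m \<open>\<tau> > 0\<close> \<open>c > 0\<close> by (simp add: \<gamma>_def K_def)
  also have "\<dots> \<le> K / real m
      * (\<gamma> * frob2 n1 n2 n3 (\<lambda>i j k. tprod r n3 A' B' i j k - tprod r n3 Astar Bstar i j k) / (2 * \<tau>\<^sup>2)
        + real (n1 * r * n3) * ln (real \<theta>) + real (r * n2 * n3) * ln (1 + real \<theta> * exp (- lam / 2))
        + lam / 2 * real (l0norm r n2 n3 B'))"
    using sparse_factor_risk_bound[where th = \<theta> and \<gamma> = \<gamma> and lam = lam, unfolded masked_laplace_def]
      assms(18,19) \<theta> \<gamma> \<open>\<tau> > 0\<close> Xstar AB' m
    unfolding M_def err_def \<gamma>_def \<theta>_def lam_def K_def by (intro mult_left_mono) simp_all
  also have "\<dots> \<le> K / real m * (3 * c\<^sup>2 / (2 * \<tau>\<^sup>2) * ln (real m)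
      + (3 + c\<^sup>2 / \<tau>\<^sup>2) * (\<beta> + 2) * (real (r * n1 * n3) + real (l0norm r n2 n3 Bstar)) * ln (real (max n1 n2)))"
    unfolding \<gamma>_def \<theta>_def lam_def \<beta>_def
    using \<open>n1 \<ge> 2\<close> \<open>n2 \<ge> 2\<close> \<open>n3 \<ge> 2\<close> \<open>0 < r\<close> \<open>b > 0\<close> \<open>c > 0\<close> \<open>4 \<le> m\<close>
      \<open>m \<le> n1 * n2 * n3\<close> sparse frob[unfolded \<theta>_def \<beta>_def] m
    by (intro mult_left_mono risk_bound_terms_le) (auto simp: K_def)
  also have "\<dots> = 3 * c^2 * (2 * \<tau> + c)^2 * ln (real m) / (real m * \<tau>^2)
       + 2 * (3 + c^2 / \<tau>^2) * (2 * \<tau> + c)^2 * (\<beta> + 2)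
         * ((real (r * n1 * n3) + real (l0norm r n2 n3 Bstar)) / real m)
         * ln (real (max n1 n2))"
    using m \<open>\<tau> > 0\<close> by (simp add: K_def field_simps)
  finally show ?thesis .
qed

end
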